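(* Let a steady perfect fluid flow of class $C^2$ be given on a neighborhood $U$ of a point $p$ in a $(d+1)$-dimensional spacetime, with local chart $(\tau,\lambda,X^i)$ on $U$ as in the context, and let $\gamma:(\sigma_1,\sigma_2)\to U$ be the fluid world line through $p$, parametrized by proper time $\sigma$. On $\Gamma=(\sigma_1,\sigma_2)\times\mathbb R_{>0}$ define $$F(\sigma,n)=h(n,s)^2\,|g_{\tau\tau}(\gamma(\sigma))|\left[1+\left(\frac{\mu}{\sqrt{|g(\gamma(\sigma))|}\,n}\right)^2\right],$$ and let $c:(\sigma_1,\sigma_2)\to\Gamma$, $c(\sigma)=(\sigma,n(\gamma(\sigma)))$. If $p$ is a sonic point, then $p_c:=c(\gamma^{-1}(p))$ satisfies $\partial_nF|_{p_c}=0$ and $\partial_\sigma F|_{p_c}=0$, and $$\mathrm{Hess}:=\big\{(\partial_\sigma^2F)(\partial_n^2F)-(\partial_\sigma\partial_nF)^2\big\}\big|_{p_c}\le0 .$$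
   Context: Perfect fluid: positive functions $n,h,P,s,T$ and $\mathbf u$ ($\mathbf u\cdot\mathbf u=-1$) with $\mathbf dh=T\mathbf ds+n^{-1}\mathbf dP$, $\nabla\cdot(n\mathbf u)=0$, $\nabla\cdot(nh\,\mathbf u\otimes\mathbf u+P\mathbf g^{-1})=0$, equation of state $h=h(P,s)$ (equivalently $h=h(n,s)$), speed of sound $v_{\rm s}^2=(\partial\ln h/\partial\ln n)_s\in(0,1)$. Steady w.r.t. a timelike Killing field $\boldsymbol\xi$ on $U$: $\mathcal L_{\boldsymbol\xi}P=\mathcal L_{\boldsymbol\xi}s=0$, $\mathcal L_{\boldsymbol\xi}\mathbf u=0$. With $\bar{\boldsymbol\xi}=\boldsymbol\xi/\sqrt{|\boldsymbol\xi\cdot\boldsymbol\xi|}$, $\mathbf u=(1-v^2)^{-1/2}(\bar{\boldsymbol\xi}+v\bar{\boldsymbol\eta})$, $v\in[0,1)$, $\bar{\boldsymbol\eta}$ unit spacelike orthogonal to $\bar{\boldsymbol\xi}$, $\mathcal L_{\boldsymbol\xi}\bar{\boldsymbol\eta}=0$; sonic point: $v=v_{\rm s}$. Chart: coordinates $(\tau,\lambda,X^i)$ on $U$ with $\boldsymbol\xi=\boldsymbol\partial_\tau$, $\bar{\boldsymbol\eta}=\boldsymbol\partial_\lambda$ (so $g_{\lambda\lambda}=1$), the $X^i$ constant on the leaves spanned by $\boldsymbol\xi,\bar{\boldsymbol\eta}$; $g$ denotes $\det(g_{\mu\nu})$ in this chart. Along $\gamma$ (which lies in one leaf), $s$ is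 constant and $\mu:=\sqrt{|g|}\,n\,u^\lambda$ is constant, where $u^\lambda=d\lambda/d\sigma$. *)

theory Defs
  imports "HOL-Analysis.Analysis"
begin

definition dderiv :: "'a::real_normed_vector \<Rightarrow> ('a \<Rightarrow> 'b::real_normed_vector) \<Rightarrow> 'a \<Rightarrow> 'b" where
  "dderiv v f x = frechet_derivative f (at x) v"

definition C1_on :: "'a::euclidean_space set \<Rightarrow> ('a \<Rightarrow> real) \<Rightarrow> bool" where
  "C1_on U f \<longleftrightarrow> f differentiable_on U \<and> (\<forall>b\<in>Basis. continuous_on U (dderiv b f))"

definition C2_on :: "'a::euclidean_space set \<Rightarrow> ('a \<Rightarrow> real) \<Rightarrow> bool" where
  "C2_on U f \<longleftrightarrow> C1_on U f \<and> (\<forall>b\<in>Basis. C1_on U (dderiv b f))"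

definition pd :: "'n::finite \<Rightarrow> (real^'n \<Rightarrow> real) \<Rightarrow> real^'n \<Rightarrow> real" where
  "pd k f x = dderiv (axis k 1) f x"

text \<open>Lorentzian signature (-,+,...,+): symmetric, with a timelike vector whose
  g-orthogonal complement is positive definite.\<close>
definition lorentzian_matrix :: "real^'n^'n \<Rightarrow> bool" where
  "lorentzian_matrix A \<longleftrightarrow> A = transpose A \<and>
     (\<exists>t. t \<bullet> (A *v t) < 0 \<and> (\<forall>w. w \<noteq> 0 \<and> (A *v t) \<bullet> w = 0 \<longrightarrow> w \<bullet> (A *v w) > 0))"

definition christoffel :: "(real^'n \<Rightarrow> real^'n^'n) \<Rightarrow> 'n::finite \<Rightarrow> 'n \<Rightarrow> 'n \<Rightarrow> real^'n \<Rightarrow> real" where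
  "christoffel g a b c x = (1/2) * (\<Sum>d\<in>UNIV. matrix_inv (g x) $ a $ d *
      (pd b (\<lambda>y. g y $ d $ c) x + pd c (\<lambda>y. g y $ d $ b) x - pd d (\<lambda>y. g y $ b $ c) x))"

definition cov_div_vec :: "(real^'n \<Rightarrow> real^'n^'n) \<Rightarrow> (real^'n \<Rightarrow> real^'n) \<Rightarrow> real^'n \<Rightarrow> real" where
  "cov_div_vec g V x = (\<Sum>a\<in>UNIV. pd a (\<lambda>y. V y $ a) x)
      + (\<Sum>a\<in>UNIV. \<Sum>b\<in>UNIV. christoffel g a a b x * V x $ b)"

definition cov_div_tensor :: "(real^'n \<Rightarrow> real^'n^'n) \<Rightarrow> (real^'n \<Rightarrow> real^'n^'n) \<Rightarrow> 'n::finite \<Rightarrow> real^'n \<Rightarrow> real" where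
  "cov_div_tensor g S b x = (\<Sum>a\<in>UNIV. pd a (\<lambda>y. S y $ a $ b) x)
      + (\<Sum>a\<in>UNIV. \<Sum>c\<in>UNIV. christoffel g a a c x * S x $ c $ b)
      + (\<Sum>a\<in>UNIV. \<Sum>c\<in>UNIV. christoffel g b a c x * S x $ a $ c)"

text \<open>Squared speed of sound (d ln h / d ln n)_s for an equation of state h = H(n,s).\<close>
definition sound_speed_sq :: "(real \<times> real \<Rightarrow> real) \<Rightarrow> real \<Rightarrow> real \<Rightarrow> real" where
  "sound_speed_sq H m s = m * dderiv (1, 0) H (m, s) / H (m, s)"

definition fluid_F :: "(real \<times> real \<Rightarrow> real) \<Rightarrow> real \<Rightarrow> real \<Rightarrow> (real^'n \<Rightarrow> real^'n^'n) \<Rightarrow> 'n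
     \<Rightarrow> (real \<Rightarrow> real^'n) \<Rightarrow> real \<times> real \<Rightarrow> real" where
  "fluid_F H s0 mu0 g tau \<gamma> = (\<lambda>(\<sigma>, m). (H (m, s0))^2 * \<bar>g (\<gamma> \<sigma>) $ tau $ tau\<bar>
      * (1 + (mu0 / (sqrt \<bar>det (g (\<gamma> \<sigma>))\<bar> * m))^2))"

end

theory Submission
  imports Defs
begin

text \<open>
  Along the world line the entropy \<open>s\<close>, the Bernoulli quantity \<open>h u\<^sub>\<tau>\<close> and the mass flux
  \<open>\<mu> = sqrt |g| n u\<^sup>\<lambda>\<close> are conserved: they follow from the covariant Euler equation lowered with
  \<open>g\<close> (using the Killing symmetry in \<open>\<tau>\<close>), the first law and the continuity equation.  With the
  normalization of \<open>u\<close> this makes \<open>F\<close> constant along the curve \<open>c\<close>, equal to \<open>(h u\<^sub>\<tau>)\<^sup>2\<close>.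
  Moreover \<open>F (\<sigma>, n) = k\<^sub>1 n * a \<sigma> + k\<^sub>2 n * e \<sigma>\<close> is separable, and at a sonic point
  \<open>v\<^sup>2 = v\<^sub>s\<^sup>2 = n \<partial>\<^sub>n h / h\<close> is exactly the condition \<open>\<partial>\<^sub>n F = 0\<close>.  Differentiating
  \<open>\<sigma> \<mapsto> F (c \<sigma>)\<close> once gives \<open>\<partial>\<^sub>\<sigma>F = 0\<close>; differentiating twice gives
  \<open>F\<^sub>\<sigma>\<^sub>\<sigma> + 2 F\<^sub>\<sigma>\<^sub>n n' + F\<^sub>n\<^sub>n n'\<^sup>2 = 0\<close>, hence
  \<open>Hess = - (F\<^sub>n\<^sub>n n' + F\<^sub>\<sigma>\<^sub>n)\<^sup>2 \<le> 0\<close>.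
\<close>

section \<open>Coordinate partial derivatives\<close>

lemma dderiv_eqI: "(f has_derivative f') (at x) \<Longrightarrow> dderiv v f x = f' v"
  unfolding dderiv_def using frechet_derivative_at by metis

lemma pd_eqI: "(f has_derivative f') (at x) \<Longrightarrow> pd k f x = f' (axis k 1)"
  unfolding pd_def by (rule dderiv_eqI)

lemma dderiv_cong_open:
  assumes "open U" "x \<in> U" "\<And>y. y \<in> U \<Longrightarrow> f y = g y"
  shows "dderiv v f x = dderiv v g x"
proof -
  have "(f has_derivative D) (at x) \<longleftrightarrow> (g has_derivative D) (at x)" for D
    using assms has_derivative_transform_within_open[of _ _ x UNIV U] by metis
  then show ?thesis
    unfolding dderiv_def frechet_derivative_def by simp
qed

lemma pd_cong_open:
  assumes "open U" "x \<in> U" "\<And>y. y \<in> U \<Longrightarrow> f y = g y"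
  shows "pd k f x = pd k g x"
  unfolding pd_def using assms by (rule dderiv_cong_open)

lemma pd_const_on_open:
  assumes "open U" "x \<in> U" "\<And>y. y \<in> U \<Longrightarrow> f y = c"
  shows "pd k f x = 0"
proof -
  have "pd k f x = pd k (\<lambda>y. c) x"
    using assms by (rule pd_cong_open)
  also have "\<dots> = 0"
    by (rule pd_eqI[of _ "\<lambda>_. 0", simplified]) simp
  finally show ?thesis .
qed

lemma differentiable_cong_open:
  assumes "open U" "x \<in> U" "\<And>y. y \<in> U \<Longrightarrow> f y = g y" "f differentiable (at x)"
  shows "g differentiable (at x)"
  using assms has_derivative_transform_within_open unfolding differentiable_def by metis

lemma C1_on_differentiable_at: "C1_on U f \<Longrightarrow> open U \<Longrightarrow> x \<in> U \<Longrightarrow> f differentiable (at x)"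
  unfolding C1_on_def differentiable_on_def using at_within_open by metis

lemma C2_on_differentiable_at: "C2_on U f \<Longrightarrow> open U \<Longrightarrow> x \<in> U \<Longrightarrow> f differentiable (at x)"
  unfolding C2_on_def using C1_on_differentiable_at by blast

lemma C2_on_dderiv_differentiable_at:
  "C2_on U f \<Longrightarrow> open U \<Longrightarrow> x \<in> U \<Longrightarrow> b \<in> Basis \<Longrightarrow> dderiv b f differentiable (at x)"
  unfolding C2_on_def using C1_on_differentiable_at by blast

lemma C2_on_pd_differentiable_at:
  fixes U :: "(real^'n::finite) set"
  assumes "C2_on U f" "open U" "x \<in> U"
  shows "pd k f differentiable (at x)"
proof -
  have "pd k f = dderiv (axis k 1) f"
    by (simp add: pd_def fun_eq_iff)
  then show ?thesis
    using C2_on_dderiv_differentiable_at[OF assms, of "axis k 1"] by simp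
qed

lemma frechet_derivative_eq_sum_pd:
  fixes f :: "real^'n::finite \<Rightarrow> real"
  assumes "f differentiable (at x)"
  shows "frechet_derivative f (at x) v = (\<Sum>k\<in>UNIV. v $ k * pd k f x)"
proof -
  let ?D = "frechet_derivative f (at x)"
  have D: "(f has_derivative ?D) (at x)"
    using assms frechet_derivative_works by blast
  have lin: "linear ?D"
    using D by (rule has_derivative_linear)
  have "v = (\<Sum>k\<in>UNIV. v $ k *\<^sub>R axis k 1)"
    using basis_expansion[of v] by (simp add: scalar_mult_eq_scaleR)
  then have "?D v = ?D (\<Sum>k\<in>UNIV. v $ k *\<^sub>R axis k 1)"
    by simp
  also have "\<dots> = (\<Sum>k\<in>UNIV. v $ k * ?D (axis k 1))"
    using lin by (simp add: linear_sum linear_scale)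
  finally show ?thesis
    using pd_eqI[OF D] by simp
qed

lemma pd_add:
  "f differentiable (at x) \<Longrightarrow> g differentiable (at x) \<Longrightarrow>
    pd k (\<lambda>y. f y + g y) x = pd k f x + pd k g x"
proof -
  assume "f differentiable (at x)" "g differentiable (at x)"
  then obtain F G where F: "(f has_derivative F) (at x)" and G: "(g has_derivative G) (at x)"
    unfolding differentiable_def by blast
  from pd_eqI[OF has_derivative_add[OF F G]] pd_eqI[OF F] pd_eqI[OF G] show ?thesis
    by simp
qed

lemma pd_mult:
  "f differentiable (at x) \<Longrightarrow> g differentiable (at x) \<Longrightarrow>
    pd k (\<lambda>y. f y * g y :: real) x = f x * pd k g x + pd k f x * g x"
proof -
  assume "f differentiable (at x)" "g differentiable (at x)"
  then obtain F G where F: "(f has_derivative F) (at x)" and G: "(g has_derivative G) (at x)"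
    unfolding differentiable_def by blast
  from pd_eqI[OF has_derivative_mult[OF F G]] pd_eqI[OF F] pd_eqI[OF G] show ?thesis
    by simp
qed

lemma pd_sum:
  assumes "finite S" "\<And>i. i \<in> S \<Longrightarrow> f i differentiable (at x)"
  shows "pd k (\<lambda>y. \<Sum>i\<in>S. f i y :: real) x = (\<Sum>i\<in>S. pd k (f i) x)"
proof -
  have "\<And>i. i \<in> S \<Longrightarrow> (f i has_derivative frechet_derivative (f i) (at x)) (at x)"
    using assms(2) frechet_derivative_works by blast
  then have "((\<lambda>y. \<Sum>i\<in>S. f i y) has_derivative
      (\<lambda>v. \<Sum>i\<in>S. frechet_derivative (f i) (at x) v)) (at x)"
    by (rule has_derivative_sum)
  from pd_eqI[OF this] show ?thesis
    by (simp add: pd_def dderiv_def)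
qed

section \<open>Matrices: inverse, Cramer's rule and Jacobi's formula\<close>

lemma symmetric_matrix_entry: "A = transpose A \<Longrightarrow> A $ i $ j = A $ j $ i"
  by (metis transpose_def vec_lambda_beta)

lemma matrix_mul_matrix_inv:
  fixes A :: "real^'n::finite^'n"
  assumes "det A \<noteq> 0"
  shows "A ** matrix_inv A = mat 1" "matrix_inv A ** A = mat 1"
proof -
  have "\<exists>A'. A ** A' = mat 1 \<and> A' ** A = mat 1"
    using assms invertible_det_nz unfolding invertible_def by blast
  then have "A ** matrix_inv A = mat 1 \<and> matrix_inv A ** A = mat 1"
    unfolding matrix_inv_def by (rule someI_ex)
  then show "A ** matrix_inv A = mat 1" "matrix_inv A ** A = mat 1"
    by auto
qed

lemma matrix_inv_entry_sum:
  fixes A :: "real^'n::finite^'n"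
  assumes "det A \<noteq> 0"
  shows "(\<Sum>k\<in>UNIV. A $ i $ k * matrix_inv A $ k $ j) = (if i = j then 1 else 0)"
    and "(\<Sum>k\<in>UNIV. matrix_inv A $ i $ k * A $ k $ j) = (if i = j then 1 else 0)"
proof -
  have "(A ** matrix_inv A) $ i $ j = mat 1 $ i $ j" "(matrix_inv A ** A) $ i $ j = mat 1 $ i $ j"
    using matrix_mul_matrix_inv[OF assms] by simp_all
  then show "(\<Sum>k\<in>UNIV. A $ i $ k * matrix_inv A $ k $ j) = (if i = j then 1 else 0)"
    and "(\<Sum>k\<in>UNIV. matrix_inv A $ i $ k * A $ k $ j) = (if i = j then 1 else 0)"
    by (simp_all add: matrix_matrix_mult_def mat_def)
qed

lemma symmetric_matrix_inv_entry:
  fixes A :: "real^'n::finite^'n"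
  assumes "det A \<noteq> 0" "A = transpose A"
  shows "matrix_inv A $ i $ j = matrix_inv A $ j $ i"
proof -
  let ?B = "matrix_inv A"
  have BA: "transpose ?B ** A = mat 1"
    by (metis assms(2) matrix_mul_matrix_inv(1)[OF assms(1)] matrix_transpose_mul transpose_mat)
  have "transpose ?B = (transpose ?B ** A) ** ?B"
    by (metis matrix_mul_matrix_inv(1)[OF assms(1)] matrix_mul_assoc matrix_mul_rid)
  also have "\<dots> = ?B"
    using BA by simp
  finally have "transpose ?B $ i $ j = ?B $ i $ j"
    by simp
  then show ?thesis
    by (simp add: transpose_def)
qed

lemma matrix_inv_entry_cramer:
  fixes A :: "real^'n::finite^'n"
  assumes "det A \<noteq> 0"
  shows "matrix_inv A $ k $ j = det (\<chi> i l. if l = k then axis j 1 $ i else A $ i $ l) / det A"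
proof -
  let ?x = "\<chi> k. matrix_inv A $ k $ j"
  have "A *v ?x = axis j 1"
    using matrix_inv_entry_sum(1)[OF assms]
    by (simp add: vec_eq_iff matrix_vector_mult_def axis_def)
  then have "?x = (\<chi> k. det (\<chi> i l. if l = k then axis j 1 $ i else A $ i $ l) / det A)"
    using cramer[OF assms] by blast
  then have "?x $ k = (\<chi> k. det (\<chi> i l. if l = k then axis j 1 $ i else A $ i $ l) / det A) $ k"
    by simp
  then show ?thesis
    by simp
qed

lemma lorentzian_matrix_det_nonzero:
  fixes A :: "real^'n::finite^'n"
  assumes "lorentzian_matrix A"
  shows "det A \<noteq> 0"
proof
  assume "det A = 0"
  obtain t where t: "t \<bullet> (A *v t) < 0"
    and pos: "\<And>w. w \<noteq> 0 \<Longrightarrow> (A *v t) \<bullet> w = 0 \<Longrightarrow> w \<bullet> (A *v w) > 0"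
    and sym: "A = transpose A"
    using assms unfolding lorentzian_matrix_def by blast
  have "\<not> invertible A"
    using \<open>det A = 0\<close> invertible_det_nz by blast
  then have "\<not> (\<exists>B. B ** A = mat 1)"
    using matrix_left_right_inverse unfolding invertible_def by blast
  then obtain w where w: "A *v w = 0" "w \<noteq> 0"
    using matrix_left_invertible_ker by blast
  have "(A *v t) \<bullet> w = t \<bullet> (A *v w)"
    by (metis sym dot_lmul_matrix vector_transpose_matrix)
  then have "w \<bullet> (A *v w) > 0"
    using pos[OF w(2)] w(1) by simp
  then show False
    using w(1) by simp
qed

lemma has_derivative_det:
  fixes M :: "'a::real_normed_vector \<Rightarrow> real^'n::finite^'n"
  assumes "\<And>i j. ((\<lambda>y. M y $ i $ j) has_derivative M' i j) (at x within S)"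
  shows "((\<lambda>y. det (M y)) has_derivative (\<lambda>h. \<Sum>p\<in>{p. p permutes (UNIV::'n set)}.
      of_int (sign p) * (\<Sum>i\<in>UNIV. M' i (p i) h * (\<Prod>j\<in>UNIV-{i}. M x $ j $ p j)))) (at x within S)"
  unfolding det_def
  by (intro has_derivative_sum has_derivative_mult_right has_derivative_prod assms)

lemma differentiable_det:
  fixes M :: "'a::real_normed_vector \<Rightarrow> real^'n::finite^'n"
  assumes "\<And>i j. (\<lambda>y. M y $ i $ j) differentiable (at x)"
  shows "(\<lambda>y. det (M y)) differentiable (at x)"
proof -
  have "\<And>i j. ((\<lambda>y. M y $ i $ j) has_derivative frechet_derivative (\<lambda>y. M y $ i $ j) (at x)) (at x)"
    using assms frechet_derivative_works by blast
  from has_derivative_det[OF this] show ?thesis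
    unfolding differentiable_def by blast
qed

lemma matrix_inv_entry_differentiable:
  fixes g :: "real^'n::finite \<Rightarrow> real^'n^'n"
  assumes U: "open U" "x \<in> U" and det: "\<And>y. y \<in> U \<Longrightarrow> det (g y) \<noteq> 0"
    and gd: "\<And>i j. (\<lambda>y. g y $ i $ j) differentiable (at x)"
  shows "(\<lambda>y. matrix_inv (g y) $ k $ j) differentiable (at x)"
proof (rule differentiable_cong_open[OF U])
  let ?C = "\<lambda>y. \<chi> i l. if l = k then axis j 1 $ i else g y $ i $ l"
  show "det (?C y) / det (g y) = matrix_inv (g y) $ k $ j" if "y \<in> U" for y
    using matrix_inv_entry_cramer[OF det[OF that]] by simp
  have "(\<lambda>y. ?C y $ i $ l) differentiable (at x)" for i l
    using gd[of i l] by (cases "l = k") simp_all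
  from differentiable_det[OF this] show "(\<lambda>y. det (?C y) / det (g y)) differentiable (at x)"
    using differentiable_det[OF gd] det[OF U(2)] by (intro differentiable_divide) auto
qed

text \<open>Differentiating the Leibniz formula replaces one row at a time; Cramer's rule evaluates
  each such determinant, which yields Jacobi's formula \<open>d(det A) = det A * tr(A\<^sup>-\<^sup>1 dA)\<close>.\<close>

lemma det_replace_row:
  fixes A B :: "real^'n::finite^'n"
  assumes "det A \<noteq> 0"
  shows "(\<Sum>p\<in>{p. p permutes (UNIV::'n set)}. of_int (sign p) * (B $ i $ p i * (\<Prod>j\<in>UNIV-{i}. A $ j $ p j)))
    = (B ** matrix_inv A) $ i $ i * det A"
proof -
  let ?R = "\<chi> j. if j = i then B $ i else A $ j"
  let ?X = "B ** matrix_inv A"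
  have "(\<Prod>j\<in>UNIV. ?R $ j $ p j) = B $ i $ p i * (\<Prod>j\<in>UNIV-{i}. A $ j $ p j)" for p
  proof -
    have "(\<Prod>j\<in>UNIV. ?R $ j $ p j) = ?R $ i $ p i * (\<Prod>j\<in>UNIV-{i}. ?R $ j $ p j)"
      by (rule prod.remove) auto
    also have "\<dots> = B $ i $ p i * (\<Prod>j\<in>UNIV-{i}. A $ j $ p j)"
      by (auto intro!: prod.cong)
    finally show ?thesis .
  qed
  then have "det ?R = (\<Sum>p\<in>{p. p permutes (UNIV::'n set)}.
      of_int (sign p) * (B $ i $ p i * (\<Prod>j\<in>UNIV-{i}. A $ j $ p j)))"
    unfolding det_def by simp
  moreover have "?X ** A = B"
    using matrix_mul_matrix_inv(2)[OF assms] by (metis matrix_mul_assoc matrix_mul_rid)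
  then have "(\<Sum>j\<in>UNIV. ?X $ i $ j *s row j A) = B $ i"
    by (simp add: vec_eq_iff sum_component row_def matrix_matrix_mult_def)
  then have "?R = (\<chi> j. if j = i then (\<Sum>l\<in>UNIV. ?X $ i $ l *s row l A) else row j A)"
    by (simp add: vec_eq_iff row_def)
  then have "det ?R = ?X $ i $ i * det A"
    using cramer_lemma_transpose[of i "?X $ i" A] by simp
  ultimately show ?thesis
    by simp
qed

lemma jacobi_formula:
  fixes A B :: "real^'n::finite^'n"
  assumes "det A \<noteq> 0"
  shows "(\<Sum>p\<in>{p. p permutes (UNIV::'n set)}. of_int (sign p) *
      (\<Sum>i\<in>UNIV. B $ i $ p i * (\<Prod>j\<in>UNIV-{i}. A $ j $ p j)))
    = det A * (\<Sum>i\<in>UNIV. \<Sum>k\<in>UNIV. B $ i $ k * matrix_inv A $ k $ i)"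
proof -
  have "(\<Sum>p\<in>{p. p permutes (UNIV::'n set)}. of_int (sign p) *
      (\<Sum>i\<in>UNIV. B $ i $ p i * (\<Prod>j\<in>UNIV-{i}. A $ j $ p j)))
    = (\<Sum>i\<in>UNIV. \<Sum>p\<in>{p. p permutes (UNIV::'n set)}.
        of_int (sign p) * (B $ i $ p i * (\<Prod>j\<in>UNIV-{i}. A $ j $ p j)))"
    unfolding sum_distrib_left by (rule sum.swap)
  also have "\<dots> = (\<Sum>i\<in>UNIV. (B ** matrix_inv A) $ i $ i * det A)"
    by (simp add: det_replace_row[OF assms])
  also have "\<dots> = det A * (\<Sum>i\<in>UNIV. \<Sum>k\<in>UNIV. B $ i $ k * matrix_inv A $ k $ i)"
    by (simp add: matrix_matrix_mult_def sum_distrib_left mult.commute)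
  finally show ?thesis .
qed

lemma pd_det:
  fixes g :: "real^'n::finite \<Rightarrow> real^'n^'n"
  assumes "det (g x) \<noteq> 0" "\<And>i j. (\<lambda>y. g y $ i $ j) differentiable (at x)"
  shows "pd k (\<lambda>y. det (g y)) x
    = det (g x) * (\<Sum>i\<in>UNIV. \<Sum>l\<in>UNIV. pd k (\<lambda>y. g y $ i $ l) x * matrix_inv (g x) $ l $ i)"
proof -
  have "\<And>i j. ((\<lambda>y. g y $ i $ j) has_derivative frechet_derivative (\<lambda>y. g y $ i $ j) (at x)) (at x)"
    using assms(2) frechet_derivative_works by blast
  from pd_eqI[OF has_derivative_det[OF this]]
  have "pd k (\<lambda>y. det (g y)) x = (\<Sum>p\<in>{p. p permutes (UNIV::'n set)}. of_int (sign p) *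
      (\<Sum>i\<in>UNIV. (\<chi> i l. pd k (\<lambda>y. g y $ i $ l) x) $ i $ p i * (\<Prod>j\<in>UNIV-{i}. g x $ j $ p j)))"
    by (simp add: pd_def dderiv_def)
  also have "\<dots> = det (g x) *
      (\<Sum>i\<in>UNIV. \<Sum>l\<in>UNIV. (\<chi> i l. pd k (\<lambda>y. g y $ i $ l) x) $ i $ l * matrix_inv (g x) $ l $ i)"
    by (rule jacobi_formula[OF assms(1)])
  finally show ?thesis
    by simp
qed

section \<open>Christoffel symbols and covariant divergences\<close>

lemma christoffel_contracted:
  fixes g :: "real^'n::finite \<Rightarrow> real^'n^'n"
  assumes "det (g x) \<noteq> 0" "g x = transpose (g x)"
  shows "(\<Sum>a\<in>UNIV. christoffel g a a c x)
    = 1/2 * (\<Sum>a\<in>UNIV. \<Sum>d\<in>UNIV. matrix_inv (g x) $ a $ d * pd c (\<lambda>y. g y $ d $ a) x)"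
proof -
  define Gi where "Gi i j = matrix_inv (g x) $ i $ j" for i j
  define dg where "dg k i j = pd k (\<lambda>y. g y $ i $ j) x" for k i j
  have "(\<Sum>a\<in>UNIV. \<Sum>d\<in>UNIV. Gi a d * dg d a c) = (\<Sum>d\<in>UNIV. \<Sum>a\<in>UNIV. Gi a d * dg d a c)"
    by (rule sum.swap)
  also have "\<dots> = (\<Sum>d\<in>UNIV. \<Sum>a\<in>UNIV. Gi d a * dg d a c)"
    unfolding Gi_def by (simp add: symmetric_matrix_inv_entry[OF assms])
  finally have swap: "(\<Sum>a\<in>UNIV. \<Sum>d\<in>UNIV. Gi a d * dg d a c) = (\<Sum>a\<in>UNIV. \<Sum>d\<in>UNIV. Gi a d * dg a d c)" .
  have "(\<Sum>a\<in>UNIV. christoffel g a a c x) = 1/2 * (\<Sum>a\<in>UNIV. \<Sum>d\<in>UNIV. Gi a d * dg a d c)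
      + 1/2 * (\<Sum>a\<in>UNIV. \<Sum>d\<in>UNIV. Gi a d * dg c d a) - 1/2 * (\<Sum>a\<in>UNIV. \<Sum>d\<in>UNIV. Gi a d * dg d a c)"
    unfolding christoffel_def Gi_def dg_def
    by (simp add: sum_distrib_left sum.distrib sum_subtractf algebra_simps)
  then show ?thesis
    using swap unfolding Gi_def dg_def by simp
qed

lemma christoffel_contracted_det:
  fixes g :: "real^'n::finite \<Rightarrow> real^'n^'n"
  assumes "det (g x) \<noteq> 0" "g x = transpose (g x)"
    and "\<And>i j. (\<lambda>y. g y $ i $ j) differentiable (at x)"
  shows "(\<Sum>a\<in>UNIV. christoffel g a a b x) * det (g x) = 1/2 * pd b (\<lambda>y. det (g y)) x"
proof -
  have "(\<Sum>a\<in>UNIV. \<Sum>d\<in>UNIV. matrix_inv (g x) $ a $ d * pd b (\<lambda>y. g y $ d $ a) x)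
      = (\<Sum>d\<in>UNIV. \<Sum>a\<in>UNIV. matrix_inv (g x) $ a $ d * pd b (\<lambda>y. g y $ d $ a) x)"
    by (rule sum.swap)
  then show ?thesis
    unfolding christoffel_contracted[of g x, OF assms(1,2)] pd_det[of g x, OF assms(1,3)]
    by (simp add: mult.commute)
qed

lemma christoffel_lowered:
  fixes g :: "real^'n::finite \<Rightarrow> real^'n^'n"
  assumes "det (g x) \<noteq> 0" "g x = transpose (g x)"
  shows "(\<Sum>b\<in>UNIV. g x $ b $ c * christoffel g b a e x)
    = 1/2 * (pd a (\<lambda>y. g y $ c $ e) x + pd e (\<lambda>y. g y $ c $ a) x - pd c (\<lambda>y. g y $ a $ e) x)"
proof -
  define X where "X d = pd a (\<lambda>y. g y $ d $ e) x + pd e (\<lambda>y. g y $ d $ a) x - pd d (\<lambda>y. g y $ a $ e) x" for d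
  have "(\<Sum>b\<in>UNIV. g x $ b $ c * christoffel g b a e x)
      = 1/2 * (\<Sum>d\<in>UNIV. \<Sum>b\<in>UNIV. g x $ c $ b * matrix_inv (g x) $ b $ d * X d)"
    unfolding christoffel_def X_def
    by (subst sum.swap) (simp add: sum_distrib_left symmetric_matrix_entry[OF assms(2), of _ c] mult.assoc)
  also have "\<dots> = 1/2 * (\<Sum>d\<in>UNIV. (if c = d then 1 else 0) * X d)"
    by (simp add: sum_distrib_right[symmetric] matrix_inv_entry_sum(1)[OF assms(1)])
  also have "\<dots> = 1/2 * X c"
  proof -
    have "(if c = d then 1 else 0) * X d = (if c = d then X d else 0)" for d
      by simp
    then show ?thesis
      by simp
  qed
  finally show ?thesis
    unfolding X_def .
qed

lemma christoffel_lowered_contraction: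
  fixes g :: "real^'n::finite \<Rightarrow> real^'n^'n" and S :: "'n \<Rightarrow> 'n \<Rightarrow> real"
  assumes U: "open U" "x \<in> U" and sym: "\<And>y. y \<in> U \<Longrightarrow> g y = transpose (g y)"
    and det: "det (g x) \<noteq> 0" and Ssym: "\<And>i j. S i j = S j i"
  shows "(\<Sum>b\<in>UNIV. g x $ b $ c * (\<Sum>a\<in>UNIV. \<Sum>e\<in>UNIV. christoffel g b a e x * S a e))
    = (\<Sum>a\<in>UNIV. \<Sum>b\<in>UNIV. pd a (\<lambda>y. g y $ b $ c) x * S a b)
      - 1/2 * (\<Sum>a\<in>UNIV. \<Sum>e\<in>UNIV. S a e * pd c (\<lambda>y. g y $ a $ e) x)"
proof -
  define dg where "dg k i j = pd k (\<lambda>y. g y $ i $ j) x" for k i j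
  have dgsym: "dg k i j = dg k j i" for k i j
    unfolding dg_def using U by (rule pd_cong_open) (simp add: symmetric_matrix_entry[OF sym])
  have "(\<Sum>b\<in>UNIV. g x $ b $ c * (\<Sum>a\<in>UNIV. \<Sum>e\<in>UNIV. christoffel g b a e x * S a e))
      = (\<Sum>b\<in>UNIV. \<Sum>a\<in>UNIV. \<Sum>e\<in>UNIV. S a e * (g x $ b $ c * christoffel g b a e x))"
    by (simp add: sum_distrib_left mult_ac)
  also have "\<dots> = (\<Sum>a\<in>UNIV. \<Sum>e\<in>UNIV. \<Sum>b\<in>UNIV. S a e * (g x $ b $ c * christoffel g b a e x))"
    by (subst sum.swap) (rule sum.cong[OF refl], rule sum.swap)
  also have "\<dots> = (\<Sum>a\<in>UNIV. \<Sum>e\<in>UNIV. S a e * (1/2 * (dg a c e + dg e c a - dg c a e)))"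
    unfolding sum_distrib_left[symmetric] dg_def christoffel_lowered[of g x, OF det sym[OF U(2)]] ..
  also have "\<dots> = 1/2 * (\<Sum>a\<in>UNIV. \<Sum>e\<in>UNIV. S a e * dg a c e) + 1/2 * (\<Sum>a\<in>UNIV. \<Sum>e\<in>UNIV. S a e * dg e c a)
      - 1/2 * (\<Sum>a\<in>UNIV. \<Sum>e\<in>UNIV. S a e * dg c a e)"
    by (simp add: sum_distrib_left sum.distrib sum_subtractf algebra_simps)
  also have "(\<Sum>a\<in>UNIV. \<Sum>e\<in>UNIV. S a e * dg e c a) = (\<Sum>a\<in>UNIV. \<Sum>e\<in>UNIV. S a e * dg a c e)"
    by (subst sum.swap) (simp add: Ssym)
  also have "(\<Sum>a\<in>UNIV. \<Sum>e\<in>UNIV. S a e * dg a c e) = (\<Sum>a\<in>UNIV. \<Sum>b\<in>UNIV. dg a b c * S a b)"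
    by (simp add: dgsym[of _ c] mult.commute)
  finally show ?thesis
    unfolding dg_def by simp
qed

lemma lowered_cov_div_tensor:
  fixes g S :: "real^'n::finite \<Rightarrow> real^'n^'n"
  assumes U: "open U" "x \<in> U" and sym: "\<And>y. y \<in> U \<Longrightarrow> g y = transpose (g y)"
    and det: "det (g x) \<noteq> 0"
    and gd: "\<And>i j. (\<lambda>y. g y $ i $ j) differentiable (at x)"
    and Sd: "\<And>i j. (\<lambda>y. S y $ i $ j) differentiable (at x)"
    and Ssym: "\<And>i j. S x $ i $ j = S x $ j $ i"
  shows "(\<Sum>b\<in>UNIV. g x $ b $ c * cov_div_tensor g S b x)
    = (\<Sum>a\<in>UNIV. pd a (\<lambda>y. \<Sum>b\<in>UNIV. g y $ b $ c * S y $ a $ b) x)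
      + (\<Sum>a\<in>UNIV. \<Sum>e\<in>UNIV. christoffel g a a e x * (\<Sum>b\<in>UNIV. S x $ e $ b * g x $ b $ c))
      - 1/2 * (\<Sum>a\<in>UNIV. \<Sum>e\<in>UNIV. S x $ a $ e * pd c (\<lambda>y. g y $ a $ e) x)"
proof -
  have "(\<Sum>b\<in>UNIV. g x $ b $ c * (\<Sum>a\<in>UNIV. pd a (\<lambda>y. S y $ a $ b) x))
      = (\<Sum>a\<in>UNIV. \<Sum>b\<in>UNIV. g x $ b $ c * pd a (\<lambda>y. S y $ a $ b) x)"
    by (subst sum.swap) (simp add: sum_distrib_left)
  also have "\<dots> = (\<Sum>a\<in>UNIV. pd a (\<lambda>y. \<Sum>b\<in>UNIV. g y $ b $ c * S y $ a $ b) x)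
      - (\<Sum>a\<in>UNIV. \<Sum>b\<in>UNIV. pd a (\<lambda>y. g y $ b $ c) x * S x $ a $ b)"
    by (simp add: pd_sum pd_mult gd Sd differentiable_mult sum.distrib sum_subtractf[symmetric])
  finally have T1: "(\<Sum>b\<in>UNIV. g x $ b $ c * (\<Sum>a\<in>UNIV. pd a (\<lambda>y. S y $ a $ b) x)) = \<dots>" .
  have "(\<Sum>b\<in>UNIV. g x $ b $ c * (\<Sum>a\<in>UNIV. \<Sum>e\<in>UNIV. christoffel g a a e x * S x $ e $ b))
      = (\<Sum>b\<in>UNIV. \<Sum>a\<in>UNIV. \<Sum>e\<in>UNIV. christoffel g a a e x * (S x $ e $ b * g x $ b $ c))"
    by (simp add: sum_distrib_left mult_ac)
  also have "\<dots> = (\<Sum>a\<in>UNIV. \<Sum>e\<in>UNIV. \<Sum>b\<in>UNIV. christoffel g a a e x * (S x $ e $ b * g x $ b $ c))"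
    by (subst sum.swap) (rule sum.cong[OF refl], rule sum.swap)
  finally have T2: "(\<Sum>b\<in>UNIV. g x $ b $ c * (\<Sum>a\<in>UNIV. \<Sum>e\<in>UNIV. christoffel g a a e x * S x $ e $ b))
      = (\<Sum>a\<in>UNIV. \<Sum>e\<in>UNIV. christoffel g a a e x * (\<Sum>b\<in>UNIV. S x $ e $ b * g x $ b $ c))"
    by (simp add: sum_distrib_left)
  show ?thesis
    unfolding cov_div_tensor_def distrib_left sum.distrib
    using T1 T2 christoffel_lowered_contraction[where g = g and x = x and S = "\<lambda>i j. S x $ i $ j" and c = c,
        OF U sym det Ssym]
    by linarith
qed

lemma perfect_fluid_tensor_lowered:
  fixes G :: "real^'n::finite^'n" and w :: "real^'n" and \<nu> \<eta> \<pi> :: real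
  assumes "det G \<noteq> 0"
  shows "(\<Sum>b\<in>UNIV. G $ b $ k * (\<nu> * \<eta> * w $ a * w $ b + \<pi> * matrix_inv G $ a $ b))
    = \<nu> * w $ a * (\<eta> * (\<Sum>b\<in>UNIV. G $ b $ k * w $ b)) + (if a = k then \<pi> else 0)"
proof -
  have "(\<Sum>b\<in>UNIV. G $ b $ k * (\<nu> * \<eta> * w $ a * w $ b + \<pi> * matrix_inv G $ a $ b))
      = \<nu> * w $ a * (\<eta> * (\<Sum>b\<in>UNIV. G $ b $ k * w $ b)) + \<pi> * (\<Sum>b\<in>UNIV. matrix_inv G $ a $ b * G $ b $ k)"
    by (simp add: sum_distrib_left sum.distrib algebra_simps)
  then show ?thesis
    using matrix_inv_entry_sum(2)[OF assms] by simp
qed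

lemma sum_pd_perfect_fluid_tensor_lowered:
  fixes g :: "real^'n::finite \<Rightarrow> real^'n^'n" and u :: "real^'n \<Rightarrow> real^'n"
    and n h P :: "real^'n \<Rightarrow> real" and k :: 'n
  assumes U: "open U" "x \<in> U" and det: "\<And>y. y \<in> U \<Longrightarrow> det (g y) \<noteq> 0"
    and gd: "\<And>i j. (\<lambda>y. g y $ i $ j) differentiable (at x)"
    and nd: "n differentiable (at x)" and hd: "h differentiable (at x)" and Pd: "P differentiable (at x)"
    and ud: "\<And>i. (\<lambda>y. u y $ i) differentiable (at x)"
  defines "W \<equiv> \<lambda>y. h y * (\<Sum>b\<in>UNIV. g y $ b $ k * u y $ b)"
  shows "(\<Sum>a\<in>UNIV. pd a (\<lambda>y. \<Sum>b\<in>UNIV. g y $ b $ k *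
        (n y * h y * u y $ a * u y $ b + P y * matrix_inv (g y) $ a $ b)) x)
    = n x * (\<Sum>a\<in>UNIV. u x $ a * pd a W x) + W x * (\<Sum>a\<in>UNIV. pd a (\<lambda>y. n y * u y $ a) x) + pd k P x"
proof -
  have Wd: "W differentiable (at x)"
    unfolding W_def using hd gd ud by (intro differentiable_mult differentiable_sum) auto
  have nud: "(\<lambda>y. n y * u y $ a) differentiable (at x)" for a
    using nd ud by (rule differentiable_mult)
  have "pd a (\<lambda>y. \<Sum>b\<in>UNIV. g y $ b $ k * (n y * h y * u y $ a * u y $ b + P y * matrix_inv (g y) $ a $ b)) x
      = pd a (\<lambda>y. n y * u y $ a * W y + (if a = k then P y else 0)) x" for a
    using U by (rule pd_cong_open) (simp add: W_def perfect_fluid_tensor_lowered[OF det])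
  also have "\<dots> a = n x * u x $ a * pd a W x + pd a (\<lambda>y. n y * u y $ a) x * W x
      + (if a = k then pd k P x else 0)" for a
    using pd_mult[OF nud Wd] pd_add[OF differentiable_mult[OF nud Wd] Pd] by (cases "a = k") simp_all
  finally show ?thesis
    by (simp add: sum.distrib sum_distrib_left mult_ac)
qed

lemma lowered_cov_div_perfect_fluid:
  fixes g :: "real^'n::finite \<Rightarrow> real^'n^'n" and u :: "real^'n \<Rightarrow> real^'n"
    and n h P :: "real^'n \<Rightarrow> real" and k :: 'n
  assumes U: "open U" "x \<in> U"
    and sym: "\<And>y. y \<in> U \<Longrightarrow> g y = transpose (g y)"
    and det: "\<And>y. y \<in> U \<Longrightarrow> det (g y) \<noteq> 0"
    and gd: "\<And>i j. (\<lambda>y. g y $ i $ j) differentiable (at x)"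
    and nd: "n differentiable (at x)" and hd: "h differentiable (at x)" and Pd: "P differentiable (at x)"
    and ud: "\<And>i. (\<lambda>y. u y $ i) differentiable (at x)"
  defines "W \<equiv> \<lambda>y. h y * (\<Sum>b\<in>UNIV. g y $ b $ k * u y $ b)"
  shows "(\<Sum>b\<in>UNIV. g x $ b $ k * cov_div_tensor g
        (\<lambda>y. \<chi> a c. n y * h y * (u y $ a) * (u y $ c) + P y * matrix_inv (g y) $ a $ c) b x)
    = n x * (\<Sum>a\<in>UNIV. u x $ a * pd a W x) + W x * cov_div_vec g (\<lambda>y. n y *\<^sub>R u y) x + pd k P x
      - 1/2 * (n x * h x) * (\<Sum>a\<in>UNIV. \<Sum>e\<in>UNIV. u x $ a * u x $ e * pd k (\<lambda>y. g y $ a $ e) x)"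
proof -
  define S where "S y = (\<chi> a c. n y * h y * (u y $ a) * (u y $ c) + P y * matrix_inv (g y) $ a $ c)" for y
  define Gi where "Gi a e = matrix_inv (g x) $ a $ e" for a e
  define dg where "dg a e = pd k (\<lambda>y. g y $ a $ e) x" for a e
  define Gam where "Gam a e = christoffel g a a e x" for a e
  have detx: "det (g x) \<noteq> 0"
    using det U(2) .
  have Gisym: "Gi a e = Gi e a" for a e
    unfolding Gi_def using detx sym[OF U(2)] by (rule symmetric_matrix_inv_entry)
  have Sd: "(\<lambda>y. S y $ i $ j) differentiable (at x)" for i j
    unfolding S_def using nd hd Pd ud matrix_inv_entry_differentiable[OF U det gd]
    by (simp add: differentiable_add differentiable_mult)
  have Ssym: "S x $ i $ j = S x $ j $ i" for i j
    unfolding S_def using Gisym[unfolded Gi_def] by (simp add: mult_ac)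
  have T1: "(\<Sum>a\<in>UNIV. pd a (\<lambda>y. \<Sum>b\<in>UNIV. g y $ b $ k * S y $ a $ b) x)
      = n x * (\<Sum>a\<in>UNIV. u x $ a * pd a W x) + W x * (\<Sum>a\<in>UNIV. pd a (\<lambda>y. n y * u y $ a) x) + pd k P x"
    unfolding S_def W_def using sum_pd_perfect_fluid_tensor_lowered[OF U det gd nd hd Pd ud] by simp
  have mixed: "(\<Sum>b\<in>UNIV. S x $ e $ b * g x $ b $ k) = n x * u x $ e * W x + (if e = k then P x else 0)" for e
    using perfect_fluid_tensor_lowered[OF detx, where k = k and a = e and \<nu> = "n x" and \<eta> = "h x"
        and w = "u x" and \<pi> = "P x"]
    unfolding S_def W_def by (simp add: mult_ac)
  have "(\<Sum>a\<in>UNIV. \<Sum>e\<in>UNIV. Gam a e * (\<Sum>b\<in>UNIV. S x $ e $ b * g x $ b $ k))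
      = (\<Sum>a\<in>UNIV. \<Sum>e\<in>UNIV. W x * (Gam a e * (n x * u x $ e)) + (if e = k then P x * Gam a e else 0))"
    using mixed by (intro sum.cong refl) (simp add: algebra_simps)
  also have "\<dots> = W x * (\<Sum>a\<in>UNIV. \<Sum>e\<in>UNIV. Gam a e * (n x * u x $ e)) + P x * (\<Sum>a\<in>UNIV. Gam a k)"
    by (simp add: sum.distrib sum_distrib_left)
  finally have T2: "(\<Sum>a\<in>UNIV. \<Sum>e\<in>UNIV. Gam a e * (\<Sum>b\<in>UNIV. S x $ e $ b * g x $ b $ k)) = \<dots>" .
  have T3: "(\<Sum>a\<in>UNIV. \<Sum>e\<in>UNIV. S x $ a $ e * dg a e)
      = n x * h x * (\<Sum>a\<in>UNIV. \<Sum>e\<in>UNIV. u x $ a * u x $ e * dg a e) + P x * (\<Sum>a\<in>UNIV. \<Sum>e\<in>UNIV. Gi a e * dg a e)"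
    unfolding S_def Gi_def by (simp add: sum.distrib sum_distrib_left algebra_simps)
  have dgsym: "dg a e = dg e a" for a e
    unfolding dg_def using U by (rule pd_cong_open) (simp add: symmetric_matrix_entry[OF sym])
  have contracted: "(\<Sum>a\<in>UNIV. Gam a k) = 1/2 * (\<Sum>a\<in>UNIV. \<Sum>e\<in>UNIV. Gi a e * dg a e)"
    using christoffel_contracted[of g x, OF detx sym[OF U(2)], of k] dgsym
    unfolding Gam_def Gi_def dg_def by simp
  have "cov_div_vec g (\<lambda>y. n y *\<^sub>R u y) x
      = (\<Sum>a\<in>UNIV. pd a (\<lambda>y. n y * u y $ a) x) + (\<Sum>a\<in>UNIV. \<Sum>e\<in>UNIV. Gam a e * (n x * u x $ e))"
    unfolding cov_div_vec_def Gam_def by simp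
  then show ?thesis
    using lowered_cov_div_tensor[OF U sym detx gd Sd Ssym, of k]
    unfolding S_def[symmetric] Gam_def[symmetric] dg_def[symmetric] T1 T2 T3 contracted
    by (simp add: algebra_simps)
qed

section \<open>Twice differentiable real functions\<close>

definition twice_differentiable_on :: "real set \<Rightarrow> (real \<Rightarrow> real) \<Rightarrow> bool" where
  "twice_differentiable_on S f \<longleftrightarrow>
    open S \<and> (\<forall>x\<in>S. f field_differentiable (at x) \<and> deriv f field_differentiable (at x))"

lemma twice_differentiable_onD:
  assumes "twice_differentiable_on S f" "x \<in> S"
  shows "f field_differentiable (at x)" "deriv f field_differentiable (at x)"
  using assms unfolding twice_differentiable_on_def by blast+

lemma twice_differentiable_on_open: "twice_differentiable_on S f \<Longrightarrow> open S"
  unfolding twice_differentiable_on_def by blast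

lemma twice_differentiable_on_deriv:
  assumes "twice_differentiable_on S f" "x \<in> S"
  shows "(f has_field_derivative deriv f x) (at x)"
    and "(deriv f has_field_derivative deriv (deriv f) x) (at x)"
  using twice_differentiable_onD[OF assms] DERIV_deriv_iff_field_differentiable by blast+

lemma twice_differentiable_onI:
  assumes "open S" "\<And>x. x \<in> S \<Longrightarrow> (f has_field_derivative f' x) (at x)"
    and "\<And>x. x \<in> S \<Longrightarrow> f' field_differentiable (at x)"
  shows "twice_differentiable_on S f"
  unfolding twice_differentiable_on_def
proof (intro conjI ballI)
  fix x assume x: "x \<in> S"
  show "f field_differentiable (at x)"
    using assms(2)[OF x] unfolding field_differentiable_def by blast
  have "f' y = deriv f y" if "y \<in> S" for y
    using assms(2)[OF that] by (rule DERIV_imp_deriv[symmetric])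
  then show "deriv f field_differentiable (at x)"
    using assms(3)[OF x] assms(1) x has_field_derivative_transform_within_open
    unfolding field_differentiable_def by blast
qed (fact assms)

lemma twice_differentiable_on_cong:
  assumes f: "twice_differentiable_on S f" and eq: "\<And>x. x \<in> S \<Longrightarrow> f x = g x"
  shows "twice_differentiable_on S g"
proof (rule twice_differentiable_onI[OF twice_differentiable_on_open[OF f]])
  fix x assume x: "x \<in> S"
  show "(g has_field_derivative deriv f x) (at x)"
    using twice_differentiable_on_deriv(1)[OF f x] twice_differentiable_on_open[OF f] x eq
    by (rule has_field_derivative_transform_within_open)
  show "deriv f field_differentiable (at x)"
    using twice_differentiable_onD(2)[OF f x] .
qed

lemma twice_differentiable_on_const: "open S \<Longrightarrow> twice_differentiable_on S (\<lambda>x. c)"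
  by (rule twice_differentiable_onI[of _ _ "\<lambda>x. 0"]) auto

lemma twice_differentiable_on_id: "open S \<Longrightarrow> twice_differentiable_on S (\<lambda>x. x)"
  by (rule twice_differentiable_onI[of _ _ "\<lambda>x. 1"]) auto

lemma twice_differentiable_on_add:
  assumes f: "twice_differentiable_on S f" and g: "twice_differentiable_on S g"
  shows "twice_differentiable_on S (\<lambda>x. f x + g x)"
proof (rule twice_differentiable_onI[OF twice_differentiable_on_open[OF f], of _ "\<lambda>x. deriv f x + deriv g x"])
  fix x assume x: "x \<in> S"
  show "((\<lambda>x. f x + g x) has_field_derivative deriv f x + deriv g x) (at x)"
    using twice_differentiable_on_deriv(1)[OF f x] twice_differentiable_on_deriv(1)[OF g x]
    by (rule DERIV_add)
  show "(\<lambda>x. deriv f x + deriv g x) field_differentiable (at x)"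
    using twice_differentiable_onD(2)[OF f x] twice_differentiable_onD(2)[OF g x]
    by (rule field_differentiable_add)
qed

lemma twice_differentiable_on_mult:
  assumes f: "twice_differentiable_on S f" and g: "twice_differentiable_on S g"
  shows "twice_differentiable_on S (\<lambda>x. f x * g x)"
proof (rule twice_differentiable_onI[OF twice_differentiable_on_open[OF f],
      of _ "\<lambda>x. deriv f x * g x + deriv g x * f x"])
  fix x assume x: "x \<in> S"
  show "((\<lambda>x. f x * g x) has_field_derivative deriv f x * g x + deriv g x * f x) (at x)"
    using twice_differentiable_on_deriv(1)[OF f x] twice_differentiable_on_deriv(1)[OF g x]
    by (rule DERIV_mult)
  show "(\<lambda>x. deriv f x * g x + deriv g x * f x) field_differentiable (at x)"
    using twice_differentiable_onD[OF f x] twice_differentiable_onD[OF g x]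
    by (intro field_differentiable_add field_differentiable_mult)
qed

lemma twice_differentiable_on_inverse:
  assumes f: "twice_differentiable_on S f" and nz: "\<And>x. x \<in> S \<Longrightarrow> f x \<noteq> 0"
  shows "twice_differentiable_on S (\<lambda>x. inverse (f x))"
proof (rule twice_differentiable_onI[OF twice_differentiable_on_open[OF f],
      of _ "\<lambda>x. - (deriv f x * inverse (f x * f x))"])
  fix x assume x: "x \<in> S"
  show "((\<lambda>x. inverse (f x)) has_field_derivative - (deriv f x * inverse (f x * f x))) (at x)"
    using DERIV_inverse_fun[OF twice_differentiable_on_deriv(1)[OF f x] nz[OF x]]
    by (simp add: power2_eq_square)
  show "(\<lambda>x. - (deriv f x * inverse (f x * f x))) field_differentiable (at x)"
    using twice_differentiable_onD[OF f x] nz[OF x]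
    by (intro field_differentiable_minus field_differentiable_mult field_differentiable_inverse) auto
qed

lemma twice_differentiable_on_sqrt:
  assumes f: "twice_differentiable_on S f" and pos: "\<And>x. x \<in> S \<Longrightarrow> f x > 0"
  shows "twice_differentiable_on S (\<lambda>x. sqrt (f x))"
proof -
  have D: "((\<lambda>x. sqrt (f x)) has_field_derivative inverse (sqrt (f x)) / 2 * deriv f x) (at x)"
    if "x \<in> S" for x
    using DERIV_chain2[OF DERIV_real_sqrt twice_differentiable_on_deriv(1)[OF f that]] pos[OF that] by blast
  show ?thesis
  proof (rule twice_differentiable_onI[OF twice_differentiable_on_open[OF f] D])
    fix x assume x: "x \<in> S"
    have "(\<lambda>x. sqrt (f x)) field_differentiable (at x)"
      using D[OF x] unfolding field_differentiable_def by blast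
    then show "(\<lambda>x. inverse (sqrt (f x)) / 2 * deriv f x) field_differentiable (at x)"
      using twice_differentiable_onD(2)[OF f x] pos[OF x]
      by (intro field_differentiable_mult field_differentiable_divide field_differentiable_inverse
          field_differentiable_const) auto
  qed
qed

lemma twice_differentiable_on_sum:
  "finite A \<Longrightarrow> open S \<Longrightarrow> (\<And>i. i \<in> A \<Longrightarrow> twice_differentiable_on S (f i)) \<Longrightarrow>
    twice_differentiable_on S (\<lambda>x. \<Sum>i\<in>A. f i x)"
  by (induct A rule: finite_induct) (simp_all add: twice_differentiable_on_const twice_differentiable_on_add)

lemma twice_differentiable_on_prod:
  "finite A \<Longrightarrow> open S \<Longrightarrow> (\<And>i. i \<in> A \<Longrightarrow> twice_differentiable_on S (f i)) \<Longrightarrow>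
    twice_differentiable_on S (\<lambda>x. \<Prod>i\<in>A. f i x)"
  by (induct A rule: finite_induct) (simp_all add: twice_differentiable_on_const twice_differentiable_on_mult)

lemma real_field_differentiable_iff:
  "(f::real \<Rightarrow> real) field_differentiable (at x) \<longleftrightarrow> f differentiable (at x)"
  using DERIV_deriv_iff_field_differentiable DERIV_deriv_iff_real_differentiable by blast

lemma DERIV_eq_0_if_const_on_open:
  assumes "open S" "x \<in> S" "\<And>y. y \<in> S \<Longrightarrow> f y = c" "(f has_field_derivative D) (at x)"
  shows "D = 0"
proof -
  have "(f has_field_derivative 0) (at x)"
    using DERIV_const assms(1,2) by (rule has_field_derivative_transform_within_open) (simp add: assms(3))
  with assms(4) show ?thesis
    by (rule DERIV_unique)
qed

section \<open>Separable functions of two variables\<close>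

lemma has_derivative_separable:
  fixes p q r t :: "real \<Rightarrow> real"
  assumes p: "(p has_field_derivative p') (at m0)" and q: "(q has_field_derivative q') (at m0)"
    and r: "(r has_field_derivative r') (at s0)" and t: "(t has_field_derivative t') (at s0)"
  shows "((\<lambda>z. p (snd z) * r (fst z) + q (snd z) * t (fst z)) has_derivative
    (\<lambda>h. p m0 * (fst h * r') + snd h * p' * r s0 + (q m0 * (fst h * t') + snd h * q' * t s0))) (at (s0, m0))"
proof -
  have scaled: "(f has_derivative (\<lambda>h. h * f')) (at x)" if "(f has_field_derivative f') (at x)" for f f' x
  proof -
    have "(\<lambda>h. h * f') = (*) f'"
      by (simp add: fun_eq_iff mult.commute)
    then show ?thesis
      using that unfolding has_field_derivative_def by simp
  qed
  have snd: "((\<lambda>z. f (snd z)) has_derivative (\<lambda>h. snd h * f')) (at (s0, m0))"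
    if "(f has_field_derivative f') (at m0)" for f f'
  proof -
    have "(snd has_derivative snd) (at (s0, m0))"
      by (rule has_derivative_snd[OF has_derivative_ident])
    moreover have "(f has_derivative (\<lambda>h. h * f')) (at (snd (s0, m0)))"
      using scaled[OF that] by simp
    ultimately show ?thesis
      by (rule has_derivative_compose)
  qed
  have fst: "((\<lambda>z. f (fst z)) has_derivative (\<lambda>h. fst h * f')) (at (s0, m0))"
    if "(f has_field_derivative f') (at s0)" for f f'
  proof -
    have "(fst has_derivative fst) (at (s0, m0))"
      by (rule has_derivative_fst[OF has_derivative_ident])
    moreover have "(f has_derivative (\<lambda>h. h * f')) (at (fst (s0, m0)))"
      using scaled[OF that] by simp
    ultimately show ?thesis
      by (rule has_derivative_compose)
  qed
  show ?thesis
    using has_derivative_add[OF has_derivative_mult[OF snd[OF p] fst[OF r]] has_derivative_mult[OF snd[OF q] fst[OF t]]]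
    by simp
qed

lemma dderiv_separable:
  fixes p q r t :: "real \<Rightarrow> real" and F :: "real \<times> real \<Rightarrow> real"
  assumes "(p has_field_derivative p') (at m0)" "(q has_field_derivative q') (at m0)"
    and "(r has_field_derivative r') (at s0)" "(t has_field_derivative t') (at s0)"
    and W: "open W" "(s0, m0) \<in> W"
    and F: "\<And>z. z \<in> W \<Longrightarrow> F z = p (snd z) * r (fst z) + q (snd z) * t (fst z)"
  shows "dderiv (1, 0) F (s0, m0) = p m0 * r' + q m0 * t'"
    and "dderiv (0, 1) F (s0, m0) = p' * r s0 + q' * t s0"
proof -
  have "(F has_derivative
      (\<lambda>h. p m0 * (fst h * r') + snd h * p' * r s0 + (q m0 * (fst h * t') + snd h * q' * t s0))) (at (s0, m0))"
    using has_derivative_separable[OF assms(1-4)] W by (rule has_derivative_transform_within_open) (simp add: F)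
  from dderiv_eqI[OF this] show "dderiv (1, 0) F (s0, m0) = p m0 * r' + q m0 * t'"
    and "dderiv (0, 1) F (s0, m0) = p' * r s0 + q' * t s0"
    by simp_all
qed

lemma separable_const_along_curve:
  assumes a: "twice_differentiable_on S a" and e: "twice_differentiable_on S e"
    and N: "twice_differentiable_on S N"
    and k1: "twice_differentiable_on T k1" and k2: "twice_differentiable_on T k2"
    and NT: "\<And>\<sigma>. \<sigma> \<in> S \<Longrightarrow> N \<sigma> \<in> T" and \<sigma>0: "\<sigma>0 \<in> S"
    and const: "\<And>\<sigma>. \<sigma> \<in> S \<Longrightarrow> k1 (N \<sigma>) * a \<sigma> + k2 (N \<sigma>) * e \<sigma> = c"
  defines "m \<equiv> N \<sigma>0"
  shows "(deriv k1 m * a \<sigma>0 + deriv k2 m * e \<sigma>0) * deriv N \<sigma>0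
      + (k1 m * deriv a \<sigma>0 + k2 m * deriv e \<sigma>0) = 0"
    and "(k1 m * deriv (deriv a) \<sigma>0 + k2 m * deriv (deriv e) \<sigma>0)
      + 2 * (deriv k1 m * deriv a \<sigma>0 + deriv k2 m * deriv e \<sigma>0) * deriv N \<sigma>0
      + (deriv (deriv k1) m * a \<sigma>0 + deriv (deriv k2) m * e \<sigma>0) * (deriv N \<sigma>0)^2
      + (deriv k1 m * a \<sigma>0 + deriv k2 m * e \<sigma>0) * deriv (deriv N) \<sigma>0 = 0"
proof -
  have S: "open S"
    using a by (rule twice_differentiable_on_open)
  note D1 = twice_differentiable_on_deriv(1) and D2 = twice_differentiable_on_deriv(2)
  have chain: "((\<lambda>x. f (N x)) has_field_derivative D * deriv N \<sigma>) (at \<sigma>)"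
    if "\<sigma> \<in> S" "(f has_field_derivative D) (at (N \<sigma>))" for f D \<sigma>
    using that(2) D1[OF N that(1)] by (rule DERIV_chain2)
  have first_derivative: "deriv k1 (N \<sigma>) * deriv N \<sigma> * a \<sigma> + k1 (N \<sigma>) * deriv a \<sigma>
      + (deriv k2 (N \<sigma>) * deriv N \<sigma> * e \<sigma> + k2 (N \<sigma>) * deriv e \<sigma>) = 0" if \<sigma>: "\<sigma> \<in> S" for \<sigma>
  proof (rule DERIV_eq_0_if_const_on_open[OF S \<sigma> const])
    show "((\<lambda>x. k1 (N x) * a x + k2 (N x) * e x) has_field_derivative
        deriv k1 (N \<sigma>) * deriv N \<sigma> * a \<sigma> + k1 (N \<sigma>) * deriv a \<sigma>
        + (deriv k2 (N \<sigma>) * deriv N \<sigma> * e \<sigma> + k2 (N \<sigma>) * deriv e \<sigma>)) (at \<sigma>)"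
      by (rule DERIV_cong[OF DERIV_add[OF DERIV_mult[OF chain[OF \<sigma> D1[OF k1 NT[OF \<sigma>]]] D1[OF a \<sigma>]]
          DERIV_mult[OF chain[OF \<sigma> D1[OF k2 NT[OF \<sigma>]]] D1[OF e \<sigma>]]]]) (simp add: algebra_simps)
  qed
  then show "(deriv k1 m * a \<sigma>0 + deriv k2 m * e \<sigma>0) * deriv N \<sigma>0
      + (k1 m * deriv a \<sigma>0 + k2 m * deriv e \<sigma>0) = 0"
    using first_derivative[OF \<sigma>0] unfolding m_def by (simp add: algebra_simps)
  note second_derivative = DERIV_add[OF
      DERIV_add[OF DERIV_mult[OF DERIV_mult[OF chain[OF \<sigma>0 D2[OF k1 NT[OF \<sigma>0]]] D2[OF N \<sigma>0]] D1[OF a \<sigma>0]]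
        DERIV_mult[OF chain[OF \<sigma>0 D1[OF k1 NT[OF \<sigma>0]]] D2[OF a \<sigma>0]]]
      DERIV_add[OF DERIV_mult[OF DERIV_mult[OF chain[OF \<sigma>0 D2[OF k2 NT[OF \<sigma>0]]] D2[OF N \<sigma>0]] D1[OF e \<sigma>0]]
        DERIV_mult[OF chain[OF \<sigma>0 D1[OF k2 NT[OF \<sigma>0]]] D2[OF e \<sigma>0]]]]
  from DERIV_eq_0_if_const_on_open[OF S \<sigma>0 first_derivative second_derivative]
  show "(k1 m * deriv (deriv a) \<sigma>0 + k2 m * deriv (deriv e) \<sigma>0)
      + 2 * (deriv k1 m * deriv a \<sigma>0 + deriv k2 m * deriv e \<sigma>0) * deriv N \<sigma>0
      + (deriv (deriv k1) m * a \<sigma>0 + deriv (deriv k2) m * e \<sigma>0) * (deriv N \<sigma>0)^2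
      + (deriv k1 m * a \<sigma>0 + deriv k2 m * e \<sigma>0) * deriv (deriv N) \<sigma>0 = 0"
    unfolding m_def by (simp add: algebra_simps power2_eq_square)
qed

lemma hessian_nonpos_if_const_along_curve:
  fixes Fs Fm Fss Fsm Fmm N1 N2 :: real
  assumes "Fm = 0" "Fm * N1 + Fs = 0" "Fss + 2 * Fsm * N1 + Fmm * N1^2 + Fm * N2 = 0"
  shows "Fs = 0" and "Fss * Fmm - Fsm^2 \<le> 0"
proof -
  show "Fs = 0"
    using assms(1,2) by simp
  have "Fss * Fmm - Fsm^2 = - ((Fmm * N1 + Fsm)^2)"
    using assms(1,3) by algebra
  then show "Fss * Fmm - Fsm^2 \<le> 0"
    by simp
qed

lemma separable_critical_point:
  fixes F :: "real \<times> real \<Rightarrow> real" and a e k1 k2 N :: "real \<Rightarrow> real"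
  assumes a: "twice_differentiable_on S a" and e: "twice_differentiable_on S e"
    and N: "twice_differentiable_on S N"
    and k1: "twice_differentiable_on T k1" and k2: "twice_differentiable_on T k2"
    and NT: "\<And>\<sigma>. \<sigma> \<in> S \<Longrightarrow> N \<sigma> \<in> T" and \<sigma>0: "\<sigma>0 \<in> S"
    and F: "\<And>\<sigma> m. \<sigma> \<in> S \<Longrightarrow> m \<in> T \<Longrightarrow> F (\<sigma>, m) = k1 m * a \<sigma> + k2 m * e \<sigma>"
    and const: "\<And>\<sigma>. \<sigma> \<in> S \<Longrightarrow> F (\<sigma>, N \<sigma>) = c"
    and crit: "deriv k1 (N \<sigma>0) * a \<sigma>0 + deriv k2 (N \<sigma>0) * e \<sigma>0 = 0"
  shows "dderiv (0, 1) F (\<sigma>0, N \<sigma>0) = 0 \<and> dderiv (1, 0) F (\<sigma>0, N \<sigma>0) = 0 \<and>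
    dderiv (1, 0) (dderiv (1, 0) F) (\<sigma>0, N \<sigma>0) * dderiv (0, 1) (dderiv (0, 1) F) (\<sigma>0, N \<sigma>0)
      - (dderiv (1, 0) (dderiv (0, 1) F) (\<sigma>0, N \<sigma>0))^2 \<le> 0"
proof -
  note D1 = twice_differentiable_on_deriv(1) and D2 = twice_differentiable_on_deriv(2)
  define W where "W = S \<times> T"
  have W: "open W"
    unfolding W_def using twice_differentiable_on_open[OF a] twice_differentiable_on_open[OF k1]
    by (rule open_Times)
  define m where "m = N \<sigma>0"
  have m: "m \<in> T"
    unfolding m_def by (rule NT[OF \<sigma>0])
  have z0: "(\<sigma>0, m) \<in> W"
    unfolding W_def using \<sigma>0 m by simp
  have FW: "F z = k1 (snd z) * a (fst z) + k2 (snd z) * e (fst z)" if "z \<in> W" for z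
    using that F unfolding W_def by auto
  have F1: "dderiv (1, 0) F z = k1 (snd z) * deriv a (fst z) + k2 (snd z) * deriv e (fst z)"
    and F2: "dderiv (0, 1) F z = deriv k1 (snd z) * a (fst z) + deriv k2 (snd z) * e (fst z)"
    if z: "z \<in> W" for z
  proof -
    obtain \<sigma> n where zz: "z = (\<sigma>, n)" and \<sigma>: "\<sigma> \<in> S" and n: "n \<in> T"
      using z unfolding W_def by auto
    note Fd = dderiv_separable[OF D1[OF k1 n] D1[OF k2 n] D1[OF a \<sigma>] D1[OF e \<sigma>] W z[unfolded zz] FW]
    show "dderiv (1, 0) F z = k1 (snd z) * deriv a (fst z) + k2 (snd z) * deriv e (fst z)"
      using Fd(1) zz by simp
    show "dderiv (0, 1) F z = deriv k1 (snd z) * a (fst z) + deriv k2 (snd z) * e (fst z)"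
      using Fd(2) zz by simp
  qed
  have F11: "dderiv (1, 0) (dderiv (1, 0) F) (\<sigma>0, m) = k1 m * deriv (deriv a) \<sigma>0 + k2 m * deriv (deriv e) \<sigma>0"
    by (rule dderiv_separable(1)[OF D1[OF k1 m] D1[OF k2 m] D2[OF a \<sigma>0] D2[OF e \<sigma>0] W z0 F1])
  have F12: "dderiv (1, 0) (dderiv (0, 1) F) (\<sigma>0, m) = deriv k1 m * deriv a \<sigma>0 + deriv k2 m * deriv e \<sigma>0"
    by (rule dderiv_separable(1)[OF D2[OF k1 m] D2[OF k2 m] D1[OF a \<sigma>0] D1[OF e \<sigma>0] W z0 F2])
  have F22: "dderiv (0, 1) (dderiv (0, 1) F) (\<sigma>0, m) = deriv (deriv k1) m * a \<sigma>0 + deriv (deriv k2) m * e \<sigma>0"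
    by (rule dderiv_separable(2)[OF D2[OF k1 m] D2[OF k2 m] D1[OF a \<sigma>0] D1[OF e \<sigma>0] W z0 F2])
  have "k1 (N \<sigma>) * a \<sigma> + k2 (N \<sigma>) * e \<sigma> = c" if "\<sigma> \<in> S" for \<sigma>
    using const[OF that] F[OF that NT[OF that]] by simp
  note curve = separable_const_along_curve[OF a e N k1 k2 NT \<sigma>0 this, folded m_def]
  show ?thesis
    using crit[folded m_def] hessian_nonpos_if_const_along_curve[OF crit[folded m_def] curve]
    unfolding F1[OF z0] F2[OF z0] F11 F12 F22 m_def[symmetric] by simp
qed

lemma fluid_F_separable:
  "fluid_F H s0 mu g tau \<gamma> (\<sigma>, m) = (H (m, s0))^2 * \<bar>g (\<gamma> \<sigma>) $ tau $ tau\<bar>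
    + mu^2 * (H (m, s0))^2 / m^2 * (\<bar>g (\<gamma> \<sigma>) $ tau $ tau\<bar> / \<bar>det (g (\<gamma> \<sigma>))\<bar>)"
proof -
  have "(mu / (sqrt \<bar>det (g (\<gamma> \<sigma>))\<bar> * m))^2 = mu^2 / (\<bar>det (g (\<gamma> \<sigma>))\<bar> * m^2)"
    by (simp add: power_divide power_mult_distrib)
  then show ?thesis
    by (simp add: fluid_F_def distrib_left divide_inverse inverse_mult_distrib mult_ac)
qed

section \<open>Steady perfect fluids\<close>

lemma sonic_balance:
  fixes m K K' v :: real
  assumes "m > 0" "K > 0" "v^2 = m * K' / K" "v^2 < 1"
  shows "K' * (1 + (v / sqrt (1 - v^2))^2) = (v / sqrt (1 - v^2))^2 * K / m"
proof -
  have "(v / sqrt (1 - v^2))^2 = v^2 / (1 - v^2)"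
    using assms(4) by (simp add: power_divide)
  then show ?thesis
    using assms by (simp add: field_simps)
qed

lemma sum_UNIV_two_terms:
  fixes F :: "'n::finite \<Rightarrow> real"
  assumes "i \<noteq> j" "\<And>k. k \<noteq> i \<Longrightarrow> k \<noteq> j \<Longrightarrow> F k = 0"
  shows "(\<Sum>k\<in>UNIV. F k) = F i + F j"
proof -
  have "(\<Sum>k\<in>UNIV. F k) = (\<Sum>k\<in>{i, j}. F k)"
    by (rule sum.mono_neutral_right) (use assms in auto)
  then show ?thesis
    using assms(1) by simp
qed

locale steady_fluid =
  fixes U :: "(real^'n::finite) set" and p :: "real^'n" and tau lam :: 'n
    and g :: "real^'n \<Rightarrow> real^'n^'n" and u :: "real^'n \<Rightarrow> real^'n"
    and n h P s T v :: "real^'n \<Rightarrow> real" and H :: "real \<times> real \<Rightarrow> real"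
    and \<gamma> :: "real \<Rightarrow> real^'n" and I :: "real set" and \<sigma>0 :: real
  assumes U_open: "open U" and p_in: "p \<in> U" and tau_lam: "tau \<noteq> lam"
    and lorentz: "\<forall>x\<in>U. lorentzian_matrix (g x)"
    and g_C2: "\<forall>i j. C2_on U (\<lambda>x. g x $ i $ j)"
    and killing: "\<forall>x\<in>U. \<forall>i j. pd tau (\<lambda>y. g y $ i $ j) x = 0"
    and timelike: "\<forall>x\<in>U. g x $ tau $ tau < 0"
    and eta_unit: "\<forall>x\<in>U. g x $ lam $ lam = 1"
    and eta_orth: "\<forall>x\<in>U. g x $ tau $ lam = 0"
    and pos: "\<forall>x\<in>U. n x > 0 \<and> h x > 0 \<and> P x > 0 \<and> s x > 0 \<and> T x > 0"
    and n_C2: "C2_on U n" and h_C2: "C2_on U h" and P_C2: "C2_on U P" and s_C2: "C2_on U s"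
    and u_C2: "\<forall>i. C2_on U (\<lambda>x. u x $ i)"
    and first_law: "\<forall>x\<in>U. \<forall>k. pd k h x = T x * pd k s x + pd k P x / n x"
    and continuity: "\<forall>x\<in>U. cov_div_vec g (\<lambda>y. n y *\<^sub>R u y) x = 0"
    and euler: "\<forall>x\<in>U. \<forall>b. cov_div_tensor g
        (\<lambda>y. \<chi> a c. n y * h y * (u y $ a) * (u y $ c) + P y * matrix_inv (g y) $ a $ c) b x = 0"
    and eos_C2: "C2_on ({0<..} \<times> {0<..}) H"
    and eos: "\<forall>m>0. \<forall>\<sigma>>0. H (m, \<sigma>) > 0 \<and> 0 < sound_speed_sq H m \<sigma> \<and> sound_speed_sq H m \<sigma> < 1"
    and h_eos: "\<forall>x\<in>U. h x = H (n x, s x)"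
    and steady: "\<forall>x\<in>U. pd tau P x = 0 \<and> pd tau s x = 0 \<and> (\<forall>i. pd tau (\<lambda>y. u y $ i) x = 0)"
    and velocity: "\<forall>x\<in>U. 0 \<le> v x \<and> v x < 1 \<and>
        u x = (1 / sqrt (1 - (v x)^2)) *\<^sub>R ((1 / sqrt \<bar>g x $ tau $ tau\<bar>) *\<^sub>R axis tau 1 + v x *\<^sub>R axis lam 1)"
    and I_open: "open I" and I_interval: "is_interval I"
    and worldline: "\<forall>\<sigma>\<in>I. \<gamma> \<sigma> \<in> U \<and> (\<gamma> has_vector_derivative u (\<gamma> \<sigma>)) (at \<sigma>)"
    and \<sigma>0_in: "\<sigma>0 \<in> I" and through_p: "\<gamma> \<sigma>0 = p"
begin

lemma g_symmetric: "y \<in> U \<Longrightarrow> g y = transpose (g y)"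
  using lorentz unfolding lorentzian_matrix_def by blast

lemma g_symmetric_entry: "y \<in> U \<Longrightarrow> g y $ i $ j = g y $ j $ i"
  using g_symmetric symmetric_matrix_entry by blast

lemma det_g_nonzero: "y \<in> U \<Longrightarrow> det (g y) \<noteq> 0"
  using lorentz lorentzian_matrix_det_nonzero by blast

lemma g_differentiable: "y \<in> U \<Longrightarrow> (\<lambda>x. g x $ i $ j) differentiable (at y)"
  using g_C2 C2_on_differentiable_at U_open by blast

lemma pd_g_differentiable: "y \<in> U \<Longrightarrow> pd k (\<lambda>x. g x $ i $ j) differentiable (at y)"
  using g_C2 C2_on_pd_differentiable_at U_open by blast

lemma det_g_differentiable: "y \<in> U \<Longrightarrow> (\<lambda>x. det (g x)) differentiable (at y)"
  by (rule differentiable_det) (rule g_differentiable)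

lemma n_differentiable: "y \<in> U \<Longrightarrow> n differentiable (at y)"
  using n_C2 C2_on_differentiable_at U_open by blast

lemma pd_n_differentiable: "y \<in> U \<Longrightarrow> pd k n differentiable (at y)"
  using n_C2 C2_on_pd_differentiable_at U_open by blast

lemma h_differentiable: "y \<in> U \<Longrightarrow> h differentiable (at y)"
  using h_C2 C2_on_differentiable_at U_open by blast

lemma P_differentiable: "y \<in> U \<Longrightarrow> P differentiable (at y)"
  using P_C2 C2_on_differentiable_at U_open by blast

lemma s_differentiable: "y \<in> U \<Longrightarrow> s differentiable (at y)"
  using s_C2 C2_on_differentiable_at U_open by blast

lemma u_differentiable: "y \<in> U \<Longrightarrow> (\<lambda>x. u x $ i) differentiable (at y)"
  using u_C2 C2_on_differentiable_at U_open by blast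

lemma n_u_differentiable: "y \<in> U \<Longrightarrow> (\<lambda>x. n x * u x $ i) differentiable (at y)"
  using n_differentiable u_differentiable by (rule differentiable_mult)

lemma u_other_component: "y \<in> U \<Longrightarrow> k \<noteq> tau \<Longrightarrow> k \<noteq> lam \<Longrightarrow> u y $ k = 0"
  using velocity by (simp add: axis_def)

lemma u_tau_eq: "y \<in> U \<Longrightarrow> u y $ tau = 1 / sqrt (1 - (v y)^2) * (1 / sqrt \<bar>g y $ tau $ tau\<bar>)"
  using velocity tau_lam by (simp add: axis_def)

lemma u_lam_eq: "y \<in> U \<Longrightarrow> u y $ lam = 1 / sqrt (1 - (v y)^2) * v y"
  using velocity tau_lam by (simp add: axis_def)

lemma sum_u_components: "y \<in> U \<Longrightarrow> (\<Sum>k\<in>UNIV. u y $ k * F k) = u y $ tau * F tau + u y $ lam * F lam"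
  by (rule sum_UNIV_two_terms[OF tau_lam]) (simp add: u_other_component)

lemma double_sum_u_components:
  assumes "x \<in> U"
  shows "(\<Sum>a\<in>UNIV. \<Sum>e\<in>UNIV. u x $ a * u x $ e * X a e) =
    u x $ tau * (u x $ tau * X tau tau + u x $ lam * X tau lam)
    + u x $ lam * (u x $ tau * X lam tau + u x $ lam * X lam lam)"
proof -
  have "(\<Sum>a\<in>UNIV. \<Sum>e\<in>UNIV. u x $ a * u x $ e * X a e) = (\<Sum>a\<in>UNIV. u x $ a * (\<Sum>e\<in>UNIV. u x $ e * X a e))"
    by (simp add: sum_distrib_left mult.assoc)
  then show ?thesis
    by (simp add: sum_u_components[OF assms])
qed

lemma u_normalized: "y \<in> U \<Longrightarrow> g y $ tau $ tau * (u y $ tau * u y $ tau) + u y $ lam * u y $ lam = -1"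
proof -
  assume y: "y \<in> U"
  define a where "a = g y $ tau $ tau"
  define w where "w = v y"
  have a: "a < 0"
    using timelike y a_def by blast
  have w: "0 \<le> w" "w < 1"
    using velocity y w_def by auto
  then have q: "1 - w^2 > 0"
    by (simp add: power_less_one_iff abs_square_less_1)
  have "u y $ tau * u y $ tau = 1 / (1 - w^2) * (1 / \<bar>a\<bar>)"
    using u_tau_eq[OF y] q a unfolding a_def[symmetric] w_def[symmetric]
    by (simp add: power2_eq_square[symmetric] power_mult_distrib real_sqrt_pow2 power_divide)
  then have "a * (u y $ tau * u y $ tau) = -1 / (1 - w^2)"
    using a q by (simp add: abs_of_neg field_simps)
  moreover have "u y $ lam * u y $ lam = w^2 / (1 - w^2)"
    using u_lam_eq[OF y] q unfolding w_def[symmetric]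
    by (simp add: power2_eq_square[symmetric] power_mult_distrib power_divide)
  moreover have "-1 / (1 - w^2) + w^2 / (1 - w^2) = (-(1 - w^2)) / (1 - w^2)"
    by (simp add: diff_divide_distrib add_divide_distrib)
  moreover have "(-(1 - w^2)) / (1 - w^2) = -1"
    using q by (simp add: divide_eq_eq)
  ultimately show ?thesis
    unfolding a_def[symmetric] by linarith
qed

lemma H_differentiable: "m > 0 \<Longrightarrow> \<sigma> > 0 \<Longrightarrow> H differentiable (at (m, \<sigma>))"
  using C2_on_differentiable_at[OF eos_C2 open_Times[OF open_greaterThan open_greaterThan]] by simp

lemma frechet_derivative_H:
  assumes "m > 0" "\<sigma> > 0"
  shows "frechet_derivative H (at (m, \<sigma>)) (a, b) = a * dderiv (1, 0) H (m, \<sigma>) + b * dderiv (0, 1) H (m, \<sigma>)"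
proof -
  have lin: "linear (frechet_derivative H (at (m, \<sigma>)))"
    using H_differentiable[OF assms] frechet_derivative_works has_derivative_linear by blast
  have "frechet_derivative H (at (m, \<sigma>)) (a, b)
      = frechet_derivative H (at (m, \<sigma>)) (a *\<^sub>R (1, 0) + b *\<^sub>R (0::real, 1::real))"
    by simp
  also have "\<dots> = a * frechet_derivative H (at (m, \<sigma>)) (1, 0) + b * frechet_derivative H (at (m, \<sigma>)) (0, 1)"
    by (simp only: linear_add[OF lin] linear_scale[OF lin] real_scaleR_def)
  finally show ?thesis
    unfolding dderiv_def .
qed

lemma DERIV_H_fst:
  assumes "m > 0" "s0 > 0"
  shows "((\<lambda>m. H (m, s0)) has_field_derivative dderiv (1, 0) H (m, s0)) (at m)"
proof -
  have "(H has_derivative frechet_derivative H (at (m, s0))) (at (m, s0))"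
    using H_differentiable[OF assms] frechet_derivative_works by blast
  from has_derivative_compose[OF has_derivative_Pair[OF has_derivative_ident has_derivative_const] this]
  have "((\<lambda>m. H (m, s0)) has_derivative (\<lambda>t. frechet_derivative H (at (m, s0)) (t, 0))) (at m)"
    by simp
  moreover have "(\<lambda>t. frechet_derivative H (at (m, s0)) (t, 0)) = (*) (dderiv (1, 0) H (m, s0))"
    by (simp add: fun_eq_iff frechet_derivative_H[OF assms] mult.commute)
  ultimately show ?thesis
    unfolding has_field_derivative_def by simp
qed

lemma pd_h_chain:
  assumes x: "x \<in> U"
  shows "pd k h x = pd k n x * dderiv (1, 0) H (n x, s x) + pd k s x * dderiv (0, 1) H (n x, s x)"
proof -
  have ns: "n x > 0" "s x > 0"
    using pos x by auto
  have "pd k h x = pd k (\<lambda>y. H (n y, s y)) x"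
    using U_open x by (rule pd_cong_open) (simp add: h_eos)
  also have "\<dots> = frechet_derivative H (at (n x, s x)) (pd k n x, pd k s x)"
  proof -
    have "(n has_derivative frechet_derivative n (at x)) (at x)"
      and "(s has_derivative frechet_derivative s (at x)) (at x)"
      and "(H has_derivative frechet_derivative H (at (n x, s x))) (at (n x, s x))"
      using n_differentiable[OF x] s_differentiable[OF x] H_differentiable[OF ns]
      by (simp_all add: frechet_derivative_works)
    from pd_eqI[OF has_derivative_compose[OF has_derivative_Pair[OF this(1,2)] this(3)]] show ?thesis
      by (simp add: pd_def dderiv_def)
  qed
  also have "\<dots> = pd k n x * dderiv (1, 0) H (n x, s x) + pd k s x * dderiv (0, 1) H (n x, s x)"
    by (rule frechet_derivative_H[OF ns])
  finally show ?thesis .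
qed

lemma dderiv_fst_H_pos: "x \<in> U \<Longrightarrow> dderiv (1, 0) H (n x, s x) > 0"
proof -
  assume x: "x \<in> U"
  have ns: "n x > 0" "s x > 0"
    using pos x by auto
  then have "H (n x, s x) > 0" "sound_speed_sq H (n x) (s x) > 0"
    using eos by auto
  then show ?thesis
    using ns unfolding sound_speed_sq_def by (simp add: zero_less_divide_iff zero_less_mult_iff)
qed

lemma pd_tau_g: "x \<in> U \<Longrightarrow> pd tau (\<lambda>y. g y $ i $ j) x = 0"
  using killing by blast

lemma pd_tau_P: "x \<in> U \<Longrightarrow> pd tau P x = 0"
  using steady by blast

lemma pd_tau_s: "x \<in> U \<Longrightarrow> pd tau s x = 0"
  using steady by blast

lemma pd_tau_u: "x \<in> U \<Longrightarrow> pd tau (\<lambda>y. u y $ i) x = 0"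
  using steady by blast

lemma pd_tau_h: "x \<in> U \<Longrightarrow> pd tau h x = 0"
  using first_law pd_tau_P pd_tau_s by simp

lemma pd_tau_n: "x \<in> U \<Longrightarrow> pd tau n x = 0"
  using pd_h_chain[of x tau] pd_tau_h pd_tau_s dderiv_fst_H_pos by fastforce

lemma pd_tau_n_u: "x \<in> U \<Longrightarrow> pd tau (\<lambda>y. n y * u y $ i) x = 0"
  by (simp add: pd_mult n_differentiable u_differentiable pd_tau_n pd_tau_u)

lemma pd_tau_det_g: "x \<in> U \<Longrightarrow> pd tau (\<lambda>y. det (g y)) x = 0"
  by (simp add: pd_det det_g_nonzero g_differentiable pd_tau_g)

lemma euler_lowered:
  assumes x: "x \<in> U"
  shows "n x * (\<Sum>a\<in>UNIV. u x $ a * pd a (\<lambda>y. h y * (\<Sum>b\<in>UNIV. g y $ b $ k * u y $ b)) x) + pd k P x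
    - 1/2 * (n x * h x) * (\<Sum>a\<in>UNIV. \<Sum>e\<in>UNIV. u x $ a * u x $ e * pd k (\<lambda>y. g y $ a $ e) x) = 0"
  using lowered_cov_div_perfect_fluid[OF U_open x g_symmetric det_g_nonzero g_differentiable[OF x]
      n_differentiable[OF x] h_differentiable[OF x] P_differentiable[OF x] u_differentiable[OF x], of k]
    continuity euler x
  by simp

definition bernoulli :: "real^'n \<Rightarrow> real" where
  "bernoulli y = h y * (g y $ tau $ tau * u y $ tau)"

lemma bernoulli_eq_lowered: "y \<in> U \<Longrightarrow> h y * (\<Sum>b\<in>UNIV. g y $ b $ tau * u y $ b) = bernoulli y"
  unfolding bernoulli_def
  using sum_UNIV_two_terms[OF tau_lam, of "\<lambda>b. g y $ b $ tau * u y $ b"] u_other_component[of y]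
    g_symmetric_entry[of y lam tau] eta_orth
  by simp

lemma h_u_lam_eq_lowered: "y \<in> U \<Longrightarrow> h y * (\<Sum>b\<in>UNIV. g y $ b $ lam * u y $ b) = h y * u y $ lam"
  using sum_UNIV_two_terms[OF tau_lam, of "\<lambda>b. g y $ b $ lam * u y $ b"] u_other_component[of y]
    eta_orth eta_unit
  by simp

lemma bernoulli_differentiable: "y \<in> U \<Longrightarrow> bernoulli differentiable (at y)"
  unfolding bernoulli_def[abs_def]
  by (intro differentiable_mult h_differentiable g_differentiable u_differentiable)

lemma pd_bernoulli:
  "x \<in> U \<Longrightarrow> pd k bernoulli x = h x * (g x $ tau $ tau * pd k (\<lambda>y. u y $ tau) x
     + pd k (\<lambda>y. g y $ tau $ tau) x * u x $ tau) + pd k h x * (g x $ tau $ tau * u x $ tau)"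
  unfolding bernoulli_def[abs_def]
  by (simp add: pd_mult differentiable_mult h_differentiable g_differentiable u_differentiable)

lemma bernoulli_transported: "x \<in> U \<Longrightarrow> (\<Sum>a\<in>UNIV. u x $ a * pd a bernoulli x) = 0"
proof -
  assume x: "x \<in> U"
  have "pd a (\<lambda>y. h y * (\<Sum>b\<in>UNIV. g y $ b $ tau * u y $ b)) x = pd a bernoulli x" for a
    using U_open x by (rule pd_cong_open) (rule bernoulli_eq_lowered)
  then have "n x * (\<Sum>a\<in>UNIV. u x $ a * pd a bernoulli x) = 0"
    using euler_lowered[OF x, of tau] by (simp add: pd_tau_g[OF x] pd_tau_P[OF x])
  moreover have "n x > 0"
    using pos x by blast
  ultimately show ?thesis
    by simp
qed

lemma pd_lam_bernoulli: "x \<in> U \<Longrightarrow> u x $ lam * pd lam bernoulli x = 0"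
  using bernoulli_transported[of x] sum_u_components[of x "\<lambda>a. pd a bernoulli x"]
  by (simp add: pd_bernoulli pd_tau_h pd_tau_g pd_tau_u)

lemma euler_lowered_lam:
  assumes x: "x \<in> U"
  shows "n x * (u x $ lam * (h x * pd lam (\<lambda>y. u y $ lam) x + pd lam h x * u x $ lam)) + pd lam P x
    - 1/2 * (n x * h x) * (u x $ tau * u x $ tau * pd lam (\<lambda>y. g y $ tau $ tau) x) = 0"
proof -
  have "pd a (\<lambda>y. h y * (\<Sum>b\<in>UNIV. g y $ b $ lam * u y $ b)) x = pd a (\<lambda>y. h y * u y $ lam) x" for a
    using U_open x by (rule pd_cong_open) (rule h_u_lam_eq_lowered)
  moreover have "(\<Sum>a\<in>UNIV. u x $ a * pd a (\<lambda>y. h y * u y $ lam) x)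
      = u x $ lam * (h x * pd lam (\<lambda>y. u y $ lam) x + pd lam h x * u x $ lam)"
    by (simp add: sum_u_components[OF x] pd_mult h_differentiable[OF x] u_differentiable[OF x]
        pd_tau_u[OF x] pd_tau_h[OF x])
  moreover have "pd lam (\<lambda>y. g y $ tau $ lam) x = 0"
    using U_open x by (rule pd_const_on_open) (use eta_orth in blast)
  moreover have "pd lam (\<lambda>y. g y $ lam $ tau) x = 0"
    using U_open x by (rule pd_const_on_open[where c = 0]) (use eta_orth g_symmetric_entry in metis)
  moreover have "pd lam (\<lambda>y. g y $ lam $ lam) x = 0"
    using U_open x by (rule pd_const_on_open) (use eta_unit in blast)
  ultimately show ?thesis
    using euler_lowered[OF x, of lam] by (simp add: double_sum_u_components[OF x])
qed

text \<open>The \<open>\<lambda>\<close>-component of Euler's equation, combined with Bernoulli's law and the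
  normalization of \<open>u\<close>, leaves the adiabatic relation \<open>dP = n dh\<close> along the flow.\<close>

lemma u_lam_pd_lam_P:
  assumes x: "x \<in> U"
  shows "u x $ lam * (pd lam P x - n x * pd lam h x) = 0"
proof -
  define A where "A = g x $ tau $ tau"
  define w where "w = u x $ tau"
  define l where "l = u x $ lam"
  define A' where "A' = pd lam (\<lambda>y. g y $ tau $ tau) x"
  define w' where "w' = pd lam (\<lambda>y. u y $ tau) x"
  define l' where "l' = pd lam (\<lambda>y. u y $ lam) x"
  define h' where "h' = pd lam h x"
  have bernoulli: "l * (h x * (A * w' + A' * w) + h' * (A * w)) = 0"
    using pd_lam_bernoulli[OF x] unfolding pd_bernoulli[OF x] A_def w_def l_def A'_def w'_def h'_def .
  have euler: "n x * (l * (h x * l' + h' * l)) + pd lam P x - 1/2 * (n x * h x) * (w * w * A') = 0"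
    using euler_lowered_lam[OF x] unfolding l_def l'_def h'_def w_def A'_def .
  have norm: "A * (w * w) + l * l = -1"
    using u_normalized[OF x] unfolding A_def w_def l_def .
  have "pd lam (\<lambda>y. g y $ tau $ tau * (u y $ tau * u y $ tau) + u y $ lam * u y $ lam) x = 0"
    using U_open x by (rule pd_const_on_open) (rule u_normalized)
  then have norm': "A * (w * w' + w' * w) + A' * (w * w) + (l * l' + l' * l) = 0"
    unfolding A_def w_def l_def A'_def w'_def l'_def
    by (simp add: pd_add pd_mult g_differentiable[OF x] u_differentiable[OF x] differentiable_mult)
  show ?thesis
    using bernoulli euler norm norm' unfolding l_def[symmetric] h'_def[symmetric] by algebra
qed

lemma entropy_transported: "x \<in> U \<Longrightarrow> (\<Sum>a\<in>UNIV. u x $ a * pd a s x) = 0"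
proof -
  assume x: "x \<in> U"
  have "n x > 0" "T x > 0"
    using pos x by auto
  moreover have "pd lam P x - n x * pd lam h x = - (n x * T x * pd lam s x)"
    using first_law x \<open>n x > 0\<close> by (simp add: algebra_simps)
  ultimately have "u x $ lam * pd lam s x = 0"
    using u_lam_pd_lam_P[OF x] by simp
  then show ?thesis
    by (simp add: sum_u_components[OF x] pd_tau_s[OF x])
qed

definition mass_flux_sq :: "real^'n \<Rightarrow> real" where
  "mass_flux_sq y = det (g y) * ((n y * u y $ lam) * (n y * u y $ lam))"

lemma mass_flux_sq_differentiable: "y \<in> U \<Longrightarrow> mass_flux_sq differentiable (at y)"
  unfolding mass_flux_sq_def[abs_def]
  by (intro differentiable_mult det_g_differentiable n_u_differentiable)

lemma continuity_lam:
  assumes x: "x \<in> U"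
  shows "2 * det (g x) * pd lam (\<lambda>y. n y * u y $ lam) x + pd lam (\<lambda>y. det (g y)) x * (n x * u x $ lam) = 0"
proof -
  define \<Gamma> where "\<Gamma> b = (\<Sum>a\<in>UNIV. christoffel g a a b x)" for b
  have "(\<Sum>a\<in>UNIV. pd a (\<lambda>y. n y * u y $ a) x) = pd tau (\<lambda>y. n y * u y $ tau) x + pd lam (\<lambda>y. n y * u y $ lam) x"
    using tau_lam U_open x by (intro sum_UNIV_two_terms pd_const_on_open) (auto simp: u_other_component)
  moreover have "(\<Sum>a\<in>UNIV. \<Sum>b\<in>UNIV. christoffel g a a b x * (n x * u x $ b)) = (\<Sum>b\<in>UNIV. u x $ b * (\<Gamma> b * n x))"
    unfolding \<Gamma>_def by (subst sum.swap) (simp add: sum_distrib_left sum_distrib_right mult_ac)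
  moreover have "(\<Sum>a\<in>UNIV. pd a (\<lambda>y. n y * u y $ a) x)
      + (\<Sum>a\<in>UNIV. \<Sum>b\<in>UNIV. christoffel g a a b x * (n x * u x $ b)) = 0"
    using continuity x unfolding cov_div_vec_def by simp
  ultimately have cont: "pd lam (\<lambda>y. n y * u y $ lam) x + u x $ lam * (\<Gamma> lam * n x) + u x $ tau * (\<Gamma> tau * n x) = 0"
    unfolding sum_u_components[OF x] by (simp add: pd_tau_n_u[OF x])
  have \<Gamma>: "\<Gamma> b * det (g x) = 1/2 * pd b (\<lambda>y. det (g y)) x" for b
    unfolding \<Gamma>_def using det_g_nonzero[OF x] g_symmetric[OF x] g_differentiable[OF x]
    by (rule christoffel_contracted_det)
  have "\<Gamma> tau = 0"
    using \<Gamma>[of tau] pd_tau_det_g[OF x] det_g_nonzero[OF x] by simp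
  with cont \<Gamma>[of lam] show ?thesis
    by algebra
qed

lemma mass_flux_sq_transported: "x \<in> U \<Longrightarrow> (\<Sum>a\<in>UNIV. u x $ a * pd a mass_flux_sq x) = 0"
proof -
  assume x: "x \<in> U"
  have pd_flux: "pd k mass_flux_sq x = det (g x) * ((n x * u x $ lam) * pd k (\<lambda>y. n y * u y $ lam) x
      + pd k (\<lambda>y. n y * u y $ lam) x * (n x * u x $ lam))
      + pd k (\<lambda>y. det (g y)) x * ((n x * u x $ lam) * (n x * u x $ lam))" for k
    unfolding mass_flux_sq_def[abs_def]
    by (simp add: pd_mult det_g_differentiable[OF x] n_u_differentiable[OF x] differentiable_mult)
  have "pd tau mass_flux_sq x = 0"
    unfolding pd_flux pd_tau_n_u[OF x] pd_tau_det_g[OF x] by simp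
  moreover have "pd lam mass_flux_sq x = 0"
    unfolding pd_flux using continuity_lam[OF x] by algebra
  ultimately show ?thesis
    by (simp add: sum_u_components[OF x])
qed

lemma worldline_in_U: "\<sigma> \<in> I \<Longrightarrow> \<gamma> \<sigma> \<in> U"
  using worldline by blast

lemma DERIV_along_worldline:
  assumes \<sigma>: "\<sigma> \<in> I" and f: "f differentiable (at (\<gamma> \<sigma>))"
  shows "((\<lambda>t. f (\<gamma> t)) has_field_derivative (\<Sum>k\<in>UNIV. u (\<gamma> \<sigma>) $ k * pd k f (\<gamma> \<sigma>))) (at \<sigma>)"
proof -
  let ?D = "frechet_derivative f (at (\<gamma> \<sigma>))"
  have D: "(f has_derivative ?D) (at (\<gamma> \<sigma>))"
    using f frechet_derivative_works by blast
  have "(\<gamma> has_derivative (\<lambda>t. t *\<^sub>R u (\<gamma> \<sigma>))) (at \<sigma>)"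
    using worldline \<sigma> unfolding has_vector_derivative_def by blast
  from has_derivative_compose[OF this D]
  have "((\<lambda>t. f (\<gamma> t)) has_derivative (\<lambda>t. ?D (t *\<^sub>R u (\<gamma> \<sigma>)))) (at \<sigma>)" .
  moreover have "(\<lambda>t. ?D (t *\<^sub>R u (\<gamma> \<sigma>))) = (*) (?D (u (\<gamma> \<sigma>)))"
    using linear_scale[OF has_derivative_linear[OF D]] by (simp add: fun_eq_iff mult.commute)
  ultimately show ?thesis
    unfolding has_field_derivative_def frechet_derivative_eq_sum_pd[OF f] by simp
qed

lemma const_along_worldline:
  assumes f: "\<And>y. y \<in> U \<Longrightarrow> f differentiable (at y)"
    and transported: "\<And>y. y \<in> U \<Longrightarrow> (\<Sum>k\<in>UNIV. u y $ k * pd k f y) = 0"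
    and \<sigma>: "\<sigma> \<in> I"
  shows "f (\<gamma> \<sigma>) = f p"
proof -
  have "((\<lambda>t. f (\<gamma> t)) has_field_derivative 0) (at t within I)" if "t \<in> I" for t
    using DERIV_along_worldline[OF that f[OF worldline_in_U[OF that]]] transported[OF worldline_in_U[OF that]]
    by (simp add: has_field_derivative_at_within)
  moreover have "convex I"
    using I_interval is_interval_convex by blast
  ultimately obtain c where "\<forall>t\<in>I. f (\<gamma> t) = c"
    using has_field_derivative_zero_constant by blast
  then show ?thesis
    using \<sigma> \<sigma>0_in through_p by metis
qed

lemma twice_differentiable_along_worldline:
  assumes f: "\<And>y. y \<in> U \<Longrightarrow> f differentiable (at y)"
    and f': "\<And>y k. y \<in> U \<Longrightarrow> pd k f differentiable (at y)"
  shows "twice_differentiable_on I (\<lambda>t. f (\<gamma> t))"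
proof (rule twice_differentiable_onI[OF I_open DERIV_along_worldline[OF _ f[OF worldline_in_U]]])
  fix \<sigma> assume \<sigma>: "\<sigma> \<in> I"
  have "(\<lambda>y. \<Sum>k\<in>UNIV. u y $ k * pd k f y) differentiable (at (\<gamma> \<sigma>))"
    using worldline_in_U[OF \<sigma>] u_differentiable f' by (intro differentiable_sum differentiable_mult) auto
  moreover have "\<gamma> differentiable (at \<sigma>)"
    using worldline \<sigma> unfolding has_vector_derivative_def differentiable_def by blast
  ultimately have "(\<lambda>t. \<Sum>k\<in>UNIV. u (\<gamma> t) $ k * pd k f (\<gamma> t)) differentiable (at \<sigma>)"
    using differentiable_compose[of "\<lambda>y. \<Sum>k\<in>UNIV. u y $ k * pd k f y" \<gamma> \<sigma>] by simp
  then show "(\<lambda>t. \<Sum>k\<in>UNIV. u (\<gamma> t) $ k * pd k f (\<gamma> t)) field_differentiable (at \<sigma>)"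
    by (simp add: real_field_differentiable_iff)
qed

lemma twice_differentiable_on_g_along_worldline: "twice_differentiable_on I (\<lambda>\<sigma>. g (\<gamma> \<sigma>) $ i $ j)"
  by (rule twice_differentiable_along_worldline) (auto intro: g_differentiable pd_g_differentiable)

lemma twice_differentiable_on_det_g_along_worldline: "twice_differentiable_on I (\<lambda>\<sigma>. det (g (\<gamma> \<sigma>)))"
proof -
  have "twice_differentiable_on I (\<lambda>\<sigma>. \<Sum>p\<in>{p. p permutes (UNIV::'n set)}.
      of_int (sign p) * (\<Prod>i\<in>UNIV. g (\<gamma> \<sigma>) $ i $ p i))"
    by (intro twice_differentiable_on_sum twice_differentiable_on_mult twice_differentiable_on_const
        twice_differentiable_on_prod twice_differentiable_on_g_along_worldline I_open finite_permutations) auto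
  then show ?thesis
    by (rule twice_differentiable_on_cong) (simp add: det_def)
qed

lemma twice_differentiable_on_H_fst:
  assumes s0: "s0 > 0"
  shows "twice_differentiable_on {0<..} (\<lambda>m. H (m, s0))"
proof (rule twice_differentiable_onI[OF open_greaterThan, where f' = "\<lambda>m. dderiv (1, 0) H (m, s0)"])
  fix m :: real assume "m \<in> {0<..}"
  then have m: "m > 0"
    by simp
  show "((\<lambda>m. H (m, s0)) has_field_derivative dderiv (1, 0) H (m, s0)) (at m)"
    by (rule DERIV_H_fst[OF m s0])
  have "dderiv (1, 0) H differentiable (at (m, s0))"
    using C2_on_dderiv_differentiable_at[OF eos_C2 open_Times[OF open_greaterThan open_greaterThan]] m s0
    by (simp add: Basis_prod_def)
  moreover have "(\<lambda>m. (m, s0)) differentiable (at m)"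
    using has_derivative_Pair[OF has_derivative_ident has_derivative_const[of s0]]
    unfolding differentiable_def by blast
  ultimately show "(\<lambda>m. dderiv (1, 0) H (m, s0)) field_differentiable (at m)"
    using differentiable_compose[of "dderiv (1, 0) H" "\<lambda>m. (m, s0)" m]
    by (simp add: real_field_differentiable_iff)
qed

lemma fluid_F_factors_twice_differentiable:
  assumes s0: "s0 > 0"
  shows "twice_differentiable_on I (\<lambda>\<sigma>. \<bar>g (\<gamma> \<sigma>) $ tau $ tau\<bar>)"
    and "twice_differentiable_on I (\<lambda>\<sigma>. \<bar>g (\<gamma> \<sigma>) $ tau $ tau\<bar> / \<bar>det (g (\<gamma> \<sigma>))\<bar>)"
    and "twice_differentiable_on I (\<lambda>\<sigma>. n (\<gamma> \<sigma>))"
    and "twice_differentiable_on {0<..} (\<lambda>m. (H (m, s0))^2)"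
    and "twice_differentiable_on {0<..} (\<lambda>m. c * (H (m, s0))^2 / m^2)"
proof -
  have "twice_differentiable_on I (\<lambda>\<sigma>. (-1) * g (\<gamma> \<sigma>) $ tau $ tau)"
    using I_open by (intro twice_differentiable_on_mult twice_differentiable_on_const
        twice_differentiable_on_g_along_worldline)
  then show abs_g: "twice_differentiable_on I (\<lambda>\<sigma>. \<bar>g (\<gamma> \<sigma>) $ tau $ tau\<bar>)"
    by (rule twice_differentiable_on_cong) (use timelike worldline_in_U in force)
  let ?D = "\<lambda>\<sigma>. det (g (\<gamma> \<sigma>))"
  have D: "twice_differentiable_on I ?D" and D0: "\<And>\<sigma>. \<sigma> \<in> I \<Longrightarrow> ?D \<sigma> \<noteq> 0"
    using twice_differentiable_on_det_g_along_worldline det_g_nonzero worldline_in_U by auto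
  have "?D \<sigma> * ?D \<sigma> > 0" if "\<sigma> \<in> I" for \<sigma>
    using D0[OF that] not_real_square_gt_zero by blast
  then have "twice_differentiable_on I (\<lambda>\<sigma>. sqrt (?D \<sigma> * ?D \<sigma>))"
    by (intro twice_differentiable_on_sqrt twice_differentiable_on_mult D)
  then have "twice_differentiable_on I (\<lambda>\<sigma>. inverse (sqrt (?D \<sigma> * ?D \<sigma>)))"
    by (rule twice_differentiable_on_inverse) (use D0 in simp)
  from twice_differentiable_on_mult[OF abs_g this]
  show "twice_differentiable_on I (\<lambda>\<sigma>. \<bar>g (\<gamma> \<sigma>) $ tau $ tau\<bar> / \<bar>det (g (\<gamma> \<sigma>))\<bar>)"
    by (rule twice_differentiable_on_cong) (simp add: divide_inverse)
  show "twice_differentiable_on I (\<lambda>\<sigma>. n (\<gamma> \<sigma>))"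
    by (rule twice_differentiable_along_worldline) (auto intro: n_differentiable pd_n_differentiable)
  have K: "twice_differentiable_on {0<..} (\<lambda>m. H (m, s0))"
    using s0 by (rule twice_differentiable_on_H_fst)
  then show K2: "twice_differentiable_on {0<..} (\<lambda>m. (H (m, s0))^2)"
    unfolding power2_eq_square by (rule twice_differentiable_on_mult[OF K])
  have "twice_differentiable_on {0<..} (\<lambda>m. c * (H (m, s0))^2 * inverse (m * m))"
    by (intro twice_differentiable_on_mult twice_differentiable_on_const twice_differentiable_on_inverse
        twice_differentiable_on_id K2) auto
  then show "twice_differentiable_on {0<..} (\<lambda>m. c * (H (m, s0))^2 / m^2)"
    by (rule twice_differentiable_on_cong) (simp add: divide_inverse power2_eq_square)
qed

lemma s_along_worldline: "\<sigma> \<in> I \<Longrightarrow> s (\<gamma> \<sigma>) = s p"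
  by (rule const_along_worldline[OF s_differentiable entropy_transported])

lemma bernoulli_along_worldline: "\<sigma> \<in> I \<Longrightarrow> bernoulli (\<gamma> \<sigma>) = bernoulli p"
  by (rule const_along_worldline[OF bernoulli_differentiable bernoulli_transported])

lemma mass_flux_sq_along_worldline: "\<sigma> \<in> I \<Longrightarrow> mass_flux_sq (\<gamma> \<sigma>) = mass_flux_sq p"
  by (rule const_along_worldline[OF mass_flux_sq_differentiable mass_flux_sq_transported])

lemma fluid_F_along_worldline:
  assumes \<sigma>: "\<sigma> \<in> I"
  shows "fluid_F H (s p) (sqrt \<bar>det (g p)\<bar> * n p * (u p $ lam)) g tau \<gamma> (\<sigma>, n (\<gamma> \<sigma>)) = (bernoulli p)^2"
proof -
  define y where "y = \<gamma> \<sigma>"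
  have y: "y \<in> U"
    unfolding y_def using \<sigma> by (rule worldline_in_U)
  define l where "l = u y $ lam"
  define X where "X z = (n z * u z $ lam) * (n z * u z $ lam)" for z
  have "\<bar>det (g y) * X y\<bar> = \<bar>det (g p) * X p\<bar>"
    using mass_flux_sq_along_worldline[OF \<sigma>] unfolding mass_flux_sq_def X_def y_def by simp
  then have "\<bar>det (g y)\<bar> * ((n y * l) * (n y * l)) = \<bar>det (g p)\<bar> * ((n p * u p $ lam) * (n p * u p $ lam))"
    unfolding abs_mult unfolding X_def l_def by simp
  moreover have "\<bar>det (g y)\<bar> > 0" "n y > 0"
    using det_g_nonzero[OF y] pos y by auto
  ultimately have flux: "((sqrt \<bar>det (g p)\<bar> * n p * u p $ lam) / (sqrt \<bar>det (g y)\<bar> * n y))^2 = l * l"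
    by (simp add: power_divide power_mult_distrib power2_eq_square[symmetric] field_simps)
  have "fluid_F H (s p) (sqrt \<bar>det (g p)\<bar> * n p * (u p $ lam)) g tau \<gamma> (\<sigma>, n y)
      = (H (n y, s p))^2 * \<bar>g y $ tau $ tau\<bar>
        * (1 + ((sqrt \<bar>det (g p)\<bar> * n p * u p $ lam) / (sqrt \<bar>det (g y)\<bar> * n y))^2)"
    unfolding fluid_F_def y_def by simp
  also have "\<dots> = (h y)^2 * (- g y $ tau $ tau) * (1 + l * l)"
    unfolding flux using h_eos y s_along_worldline[OF \<sigma>, folded y_def] timelike by (simp add: abs_of_neg)
  also have "\<dots> = (bernoulli y)^2"
    using u_normalized[OF y] unfolding bernoulli_def l_def power2_eq_square by algebra
  finally have "fluid_F H (s p) (sqrt \<bar>det (g p)\<bar> * n p * (u p $ lam)) g tau \<gamma> (\<sigma>, n y) = (bernoulli y)^2" .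
  then show ?thesis
    unfolding y_def bernoulli_along_worldline[OF \<sigma>] .
qed

lemma sonic_point_balance:
  assumes sonic: "v p = sqrt (sound_speed_sq H (n p) (s p))"
  shows "dderiv (1, 0) H (n p, s p) * (1 + (u p $ lam)^2) = (u p $ lam)^2 * H (n p, s p) / n p"
proof -
  have m: "n p > 0" and s: "s p > 0"
    using pos p_in by auto
  then have K: "H (n p, s p) > 0"
    and c: "0 < sound_speed_sq H (n p) (s p)" "sound_speed_sq H (n p) (s p) < 1"
    using eos by auto
  have v2: "(v p)^2 = n p * dderiv (1, 0) H (n p, s p) / H (n p, s p)"
    using sonic c unfolding sound_speed_sq_def by simp
  moreover have "u p $ lam = v p / sqrt (1 - (v p)^2)"
    using u_lam_eq[OF p_in] by simp
  ultimately show ?thesis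
    using sonic_balance[OF m K v2] c unfolding sound_speed_sq_def by simp
qed

lemma sonic_point_critical:
  assumes sonic: "v p = sqrt (sound_speed_sq H (n p) (s p))"
  defines "mu \<equiv> sqrt \<bar>det (g p)\<bar> * n p * (u p $ lam)"
  shows "deriv (\<lambda>m. (H (m, s p))^2) (n p) * \<bar>g p $ tau $ tau\<bar>
    + deriv (\<lambda>m. mu^2 * (H (m, s p))^2 / m^2) (n p) * (\<bar>g p $ tau $ tau\<bar> / \<bar>det (g p)\<bar>) = 0"
proof -
  define m where "m = n p"
  define K where "K = H (m, s p)"
  define K' where "K' = dderiv (1, 0) H (m, s p)"
  define l where "l = u p $ lam"
  define k1 where "k1 m = (H (m, s p))^2" for m
  define k2 where "k2 m = mu^2 * (H (m, s p))^2 / m^2" for m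
  have m: "m > 0"
    unfolding m_def using pos p_in by auto
  have HK: "((\<lambda>m. H (m, s p)) has_field_derivative K') (at m)"
    unfolding K'_def using m pos p_in by (intro DERIV_H_fst) auto
  have dk1: "deriv k1 m = 2 * K' * K"
    unfolding k1_def[abs_def] K_def
    by (rule DERIV_imp_deriv) (use DERIV_power[OF HK, of 2] in \<open>simp add: mult.assoc\<close>)
  have dk2: "deriv k2 m = mu^2 * (2 * K' * K * m^2 - K^2 * (2 * m)) / (m^2 * m^2)"
    unfolding k2_def[abs_def] K_def using m
    by (intro DERIV_imp_deriv DERIV_cong[OF DERIV_divide[OF DERIV_cmult[OF DERIV_power[OF HK]] DERIV_power[OF DERIV_ident]]])
      (auto simp: algebra_simps)
  have mu2: "mu^2 = \<bar>det (g p)\<bar> * m^2 * l^2"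
    unfolding mu_def m_def l_def by (simp add: power_mult_distrib)
  have "deriv k1 m * \<bar>g p $ tau $ tau\<bar> + deriv k2 m * (\<bar>g p $ tau $ tau\<bar> / \<bar>det (g p)\<bar>)
    = 2 * \<bar>g p $ tau $ tau\<bar> * K * (K' * (1 + l^2) - l^2 * K / m)"
    unfolding dk1 dk2 mu2 using m det_g_nonzero[OF p_in] by (simp add: field_simps power2_eq_square)
  also have "\<dots> = 0"
    using sonic_point_balance[OF sonic] unfolding K_def K'_def l_def m_def by simp
  finally show ?thesis
    unfolding m_def k1_def[abs_def] k2_def[abs_def] .
qed
end

theorem theorem7:
  fixes U :: "(real^'n::finite) set" and p :: "real^'n" and tau lam :: 'n
    and g :: "real^'n \<Rightarrow> real^'n^'n" and u :: "real^'n \<Rightarrow> real^'n"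
    and n h P s T v :: "real^'n \<Rightarrow> real" and H :: "real \<times> real \<Rightarrow> real"
    and \<gamma> :: "real \<Rightarrow> real^'n" and I :: "real set" and \<sigma>0 :: real
  assumes U_open: "open U" and p_in: "p \<in> U" and tau_lam: "tau \<noteq> lam"
    and lorentz: "\<forall>x\<in>U. lorentzian_matrix (g x)"
    and g_C2: "\<forall>i j. C2_on U (\<lambda>x. g x $ i $ j)"
    and killing: "\<forall>x\<in>U. \<forall>i j. pd tau (\<lambda>y. g y $ i $ j) x = 0"
    and timelike: "\<forall>x\<in>U. g x $ tau $ tau < 0"
    and eta_unit: "\<forall>x\<in>U. g x $ lam $ lam = 1"
    and eta_orth: "\<forall>x\<in>U. g x $ tau $ lam = 0"
    and pos: "\<forall>x\<in>U. n x > 0 \<and> h x > 0 \<and> P x > 0 \<and> s x > 0 \<and> T x > 0"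
    and reg: "C2_on U n" "C2_on U h" "C2_on U P" "C2_on U s" "C2_on U T"
             "\<forall>i. C2_on U (\<lambda>x. u x $ i)"
    and unit_u: "\<forall>x\<in>U. u x \<bullet> (g x *v u x) = -1"
    and first_law: "\<forall>x\<in>U. \<forall>k. pd k h x = T x * pd k s x + pd k P x / n x"
    and continuity: "\<forall>x\<in>U. cov_div_vec g (\<lambda>y. n y *\<^sub>R u y) x = 0"
    and euler: "\<forall>x\<in>U. \<forall>b. cov_div_tensor g
        (\<lambda>y. \<chi> a c. n y * h y * (u y $ a) * (u y $ c) + P y * matrix_inv (g y) $ a $ c) b x = 0"
    and eos_C2: "C2_on ({0<..} \<times> {0<..}) H"
    and eos: "\<forall>m>0. \<forall>\<sigma>>0. H (m, \<sigma>) > 0 \<and> 0 < sound_speed_sq H m \<sigma> \<and> sound_speed_sq H m \<sigma> < 1"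
    and h_eos: "\<forall>x\<in>U. h x = H (n x, s x)"
    and steady: "\<forall>x\<in>U. pd tau P x = 0 \<and> pd tau s x = 0 \<and> (\<forall>i. pd tau (\<lambda>y. u y $ i) x = 0)"
    and velocity: "\<forall>x\<in>U. 0 \<le> v x \<and> v x < 1 \<and>
        u x = (1 / sqrt (1 - (v x)^2)) *\<^sub>R ((1 / sqrt \<bar>g x $ tau $ tau\<bar>) *\<^sub>R axis tau 1 + v x *\<^sub>R axis lam 1)"
    and I_open: "open I" and I_interval: "is_interval I"
    and worldline: "\<forall>\<sigma>\<in>I. \<gamma> \<sigma> \<in> U \<and> (\<gamma> has_vector_derivative u (\<gamma> \<sigma>)) (at \<sigma>)"
    and \<sigma>0_in: "\<sigma>0 \<in> I" and through_p: "\<gamma> \<sigma>0 = p"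
    and sonic: "v p = sqrt (sound_speed_sq H (n p) (s p))"
  shows "let F = fluid_F H (s p) (sqrt \<bar>det (g p)\<bar> * n p * (u p $ lam)) g tau \<gamma>;
             pc = (\<sigma>0, n p)
         in dderiv (0, 1) F pc = 0 \<and> dderiv (1, 0) F pc = 0 \<and>
            dderiv (1, 0) (dderiv (1, 0) F) pc * dderiv (0, 1) (dderiv (0, 1) F) pc
              - (dderiv (1, 0) (dderiv (0, 1) F) pc)^2 \<le> 0"
proof -
  interpret steady_fluid U p tau lam g u n h P s T v H \<gamma> I \<sigma>0
    by unfold_locales (fact assms)+
  define mu where "mu = sqrt \<bar>det (g p)\<bar> * n p * (u p $ lam)"
  define F where "F = fluid_F H (s p) mu g tau \<gamma>"
  have "s p > 0"
    using pos p_in by blast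
  note factors = fluid_F_factors_twice_differentiable[OF this]
  have "n (\<gamma> \<sigma>) \<in> {0<..}" if "\<sigma> \<in> I" for \<sigma>
    using pos worldline_in_U[OF that] by simp
  moreover have "F (\<sigma>, n (\<gamma> \<sigma>)) = (bernoulli p)^2" if "\<sigma> \<in> I" for \<sigma>
    unfolding F_def mu_def using that by (rule fluid_F_along_worldline)
  moreover have "deriv (\<lambda>m. (H (m, s p))^2) (n (\<gamma> \<sigma>0)) * \<bar>g (\<gamma> \<sigma>0) $ tau $ tau\<bar>
      + deriv (\<lambda>m. mu^2 * (H (m, s p))^2 / m^2) (n (\<gamma> \<sigma>0))
        * (\<bar>g (\<gamma> \<sigma>0) $ tau $ tau\<bar> / \<bar>det (g (\<gamma> \<sigma>0))\<bar>) = 0"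
    using sonic_point_critical[OF sonic] unfolding through_p mu_def .
  ultimately have "dderiv (0, 1) F (\<sigma>0, n (\<gamma> \<sigma>0)) = 0 \<and> dderiv (1, 0) F (\<sigma>0, n (\<gamma> \<sigma>0)) = 0 \<and>
      dderiv (1, 0) (dderiv (1, 0) F) (\<sigma>0, n (\<gamma> \<sigma>0)) * dderiv (0, 1) (dderiv (0, 1) F) (\<sigma>0, n (\<gamma> \<sigma>0))
        - (dderiv (1, 0) (dderiv (0, 1) F) (\<sigma>0, n (\<gamma> \<sigma>0)))^2 \<le> 0"
    using separable_critical_point[OF factors(1-4) factors(5)[of "mu^2"], where F = F] \<sigma>0_in
    unfolding F_def fluid_F_separable by blast
  then show ?thesis
    unfolding F_def mu_def through_p Let_def .
qed

end
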